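(* Consider $N\ge2$ heterogeneous agents $x_i(k+1)=A_ix_i(k)+B_iu_i(k)$, $y_i(k)=C_ix_i(k)$, with $x_i\in\mathbb{R}^{n_i}$, $u_i\in\mathbb{R}^{m_i}$, $y_i\in\mathbb{R}^p$, and local (introspective) measurement $z_i(k)=C_i^m x_i(k)$, where for each $i$: $(A_i,B_i)$ is stabilizable, $(C_i,A_i)$ is detectable, $(C_i,A_i,B_i)$ is right-invertible, and $(C_i^m,A_i)$ is detectable. Let $(C,A,B)$ be a triple with $\operatorname{rank}C=p$, invertible of uniform rank $n_q\ge\bar n_d$ (the maximal order of infinite zeros of the $(C_i,A_i,B_i)$), without invariant zeros, and with all eigenvalues of $A$ in the closed unit disc. Suppose that for each $i$ a pre-compensator $\xi_i(k+1)=A_{i,h}\xi_i(k)+B_{i,h}z_i(k)+E_{i,h}v_i(k)$, $u_i(k)=C_{i,h}\xi_i(k)+D_{i,h}v_i(k)$ is given such that the interconnection with agent $i$ can be written as $\bar x_i(k+1)=A\bar x_i(k)+B(v_i(k)+d_i(k))$, $y_i(k)=C\bar x_i(k)$, where $\omega_i(k+1)=A_{i,s}\omega_i(k)$, $d_i(k)=C_{i,s}\omega_i(k)$ with $A_{i,s}$ Schur stable. Let $K$, $H$ be such that $A-BK$ and $A-HC$ are Schur stable, and apply to each agent the protocol $$\begin{aligned}\xi_i(k+1)&=A_{i,h}\xi_i(k)+B_{i,h}z_i(k)-E_{i,h}K\eta_i(k),\\ \hat x_i(k+1)&=A\hat x_i(k)-BK\hat\zeta_i(k)+H(\zeta_i(k)-C\hat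 x_i(k)),\\ \eta_i(k+1)&=(A-BK)\eta_i(k)+A\hat x_i(k)-A\hat\zeta_i(k),\\ u_i(k)&=C_{i,h}\xi_i(k)-D_{i,h}K\eta_i(k),\end{aligned}$$ with $\zeta_i(k)=\sum_{j}d_{ij}(y_i(k)-y_j(k))$ and $\hat\zeta_i(k)=\sum_j d_{ij}(\eta_i(k)-\eta_j(k))$. Then for every $N$, every weighted directed graph on $N$ nodes containing a directed spanning tree, and all initial conditions, output synchronization holds: $\lim_{k\to\infty}(y_i(k)-y_j(k))=0$ for all $i,j$.
   Context: The network is a weighted directed graph with adjacency matrix $[a_{ij}]$, $a_{ij}\ge0$, $a_{ii}=0$ ($a_{ij}>0$ means an edge from $j$ to $i$); weighted in-degree $d_{in}(i)=\sum_j a_{ij}$; $d_{ij}=a_{ij}/(1+d_{in}(i))$ for $j\ne i$, $d_{ii}=1/(1+d_{in}(i))$. Schur stable means all eigenvalues in the open unit disc. Right-invertibility of $(C_i,A_i,B_i)$ means every reference output can be produced by suitable initial condition and input. A directed spanning tree is a subgraph containing all nodes in which every node except one root has exactly one parent. *)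

theory Defs
  imports "Jordan_Normal_Form.Char_Poly" "Jordan_Normal_Form.DL_Rank"
begin

definition schur_stable :: "real mat \<Rightarrow> bool" where
  "schur_stable M \<longleftrightarrow> square_mat M \<and>
     (\<forall>ev. eigenvalue (map_mat complex_of_real M) ev \<longrightarrow> cmod ev < 1)"

definition stabilizable :: "real mat \<Rightarrow> real mat \<Rightarrow> bool" where
  "stabilizable A B \<longleftrightarrow> (\<exists>F. F \<in> carrier_mat (dim_col B) (dim_row A) \<and> schur_stable (A + B * F))"

definition detectable :: "real mat \<Rightarrow> real mat \<Rightarrow> bool" where
  "detectable C A \<longleftrightarrow> (\<exists>L. L \<in> carrier_mat (dim_row A) (dim_row C) \<and> schur_stable (A + L * C))"

definition right_invertible :: "real mat \<Rightarrow> real mat \<Rightarrow> real mat \<Rightarrow> bool" where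
  "right_invertible C A B \<longleftrightarrow>
     (\<forall>yr :: nat \<Rightarrow> real vec. (\<forall>k. yr k \<in> carrier_vec (dim_row C)) \<longrightarrow>
        (\<exists>x u. x 0 \<in> carrier_vec (dim_row A) \<and> (\<forall>k. u k \<in> carrier_vec (dim_col B)) \<and>
               (\<forall>k. x (Suc k) = A *\<^sub>v x k + B *\<^sub>v u k) \<and>
               (\<forall>k. C *\<^sub>v x k = yr k)))"

definition invertible_uniform_rank :: "real mat \<Rightarrow> real mat \<Rightarrow> real mat \<Rightarrow> nat \<Rightarrow> bool" where
  "invertible_uniform_rank C A B nq \<longleftrightarrow>
     dim_row C = dim_col B \<and> nq \<ge> 1 \<and>
     (\<forall>j < nq - 1. C * (A ^\<^sub>m j) * B = 0\<^sub>m (dim_row C) (dim_col B)) \<and>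
     det (C * (A ^\<^sub>m (nq - 1)) * B) \<noteq> 0"

definition rosenbrock :: "real mat \<Rightarrow> real mat \<Rightarrow> real mat \<Rightarrow> complex \<Rightarrow> complex mat" where
  "rosenbrock C A B z = four_block_mat
      (z \<cdot>\<^sub>m 1\<^sub>m (dim_row A) - map_mat complex_of_real A) (- map_mat complex_of_real B)
      (map_mat complex_of_real C) (0\<^sub>m (dim_row C) (dim_col B))"

definition rosenbrock_rank :: "real mat \<Rightarrow> real mat \<Rightarrow> real mat \<Rightarrow> complex \<Rightarrow> nat" where
  "rosenbrock_rank C A B z = vec_space.rank (dim_row A + dim_row C) (rosenbrock C A B z)"

definition normal_rank :: "real mat \<Rightarrow> real mat \<Rightarrow> real mat \<Rightarrow> nat" where
  "normal_rank C A B = Max (range (rosenbrock_rank C A B))"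

definition invariant_zero :: "real mat \<Rightarrow> real mat \<Rightarrow> real mat \<Rightarrow> complex \<Rightarrow> bool" where
  "invariant_zero C A B z \<longleftrightarrow> rosenbrock_rank C A B z < normal_rank C A B"

text \<open>Block lower-triangular Toeplitz matrix of the Markov parameters C A^(j-1) B, j = 1..k.\<close>
definition markov_toeplitz :: "real mat \<Rightarrow> real mat \<Rightarrow> real mat \<Rightarrow> nat \<Rightarrow> real mat" where
  "markov_toeplitz C A B k =
     (let p = dim_row C; m = dim_col B in
      mat (k * p) (k * m) (\<lambda>(r, c). let a = r div p; b = c div m in
         if b \<le> a then (C * (A ^\<^sub>m (a - b)) * B) $$ (r mod p, c mod m) else 0))"

definition toeplitz_rank :: "real mat \<Rightarrow> real mat \<Rightarrow> real mat \<Rightarrow> nat \<Rightarrow> nat" where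
  "toeplitz_rank C A B k = vec_space.rank (k * dim_row C) (markov_toeplitz C A B k)"

text \<open>Number of infinite zeros of order at most k (structure at infinity, via Toeplitz ranks).\<close>
definition inf_zeros_upto :: "real mat \<Rightarrow> real mat \<Rightarrow> real mat \<Rightarrow> nat \<Rightarrow> nat" where
  "inf_zeros_upto C A B k =
     (if k = 0 then 0 else toeplitz_rank C A B k - toeplitz_rank C A B (k - 1))"

definition max_inf_zero_order :: "real mat \<Rightarrow> real mat \<Rightarrow> real mat \<Rightarrow> nat" where
  "max_inf_zero_order C A B =
     (LEAST k. \<forall>j\<ge>k. inf_zeros_upto C A B j = inf_zeros_upto C A B k)"

text \<open>a i j > 0 means an edge from j to i. A directed spanning tree: a root r and a parent
  map on the other nodes along existing edges such that every node reaches the root.\<close>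
definition has_directed_spanning_tree :: "nat \<Rightarrow> (nat \<Rightarrow> nat \<Rightarrow> real) \<Rightarrow> bool" where
  "has_directed_spanning_tree N a \<longleftrightarrow>
     (\<exists>r < N. \<exists>par :: nat \<Rightarrow> nat.
        (\<forall>i < N. i \<noteq> r \<longrightarrow> par i < N \<and> a i (par i) > 0) \<and>
        (\<forall>i < N. \<exists>k. (par ^^ k) i = r \<and> (\<forall>l < k. (par ^^ l) i \<noteq> r)))"

definition in_degree :: "nat \<Rightarrow> (nat \<Rightarrow> nat \<Rightarrow> real) \<Rightarrow> nat \<Rightarrow> real" where
  "in_degree N a i = (\<Sum>j<N. a i j)"

definition dcoef :: "nat \<Rightarrow> (nat \<Rightarrow> nat \<Rightarrow> real) \<Rightarrow> nat \<Rightarrow> nat \<Rightarrow> real" where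
  "dcoef N a i j = (if j = i then 1 / (1 + in_degree N a i) else a i j / (1 + in_degree N a i))"

text \<open>The interconnection of agent (Ai,Bi,Ci,Cmi) with the pre-compensator
  (Ah,Bh,Eh,Ch,Dh) (input v, output y) is, after an invertible change of state coordinates
  (xbar; omega) = T (x; xi), of the form
  xbar+ = A xbar + B (v + Cs omega), omega+ = As omega, y = C xbar.\<close>
definition interconnection_form ::
  "real mat \<Rightarrow> real mat \<Rightarrow> real mat \<Rightarrow> real mat \<Rightarrow>
   real mat \<Rightarrow> real mat \<Rightarrow> real mat \<Rightarrow> real mat \<Rightarrow> real mat \<Rightarrow>
   real mat \<Rightarrow> real mat \<Rightarrow> real mat \<Rightarrow> real mat \<Rightarrow> real mat \<Rightarrow> bool" where
  "interconnection_form Ai Bi Ci Cmi Ah Bh Eh Ch Dh A B C As Cs \<longleftrightarrow>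
     (let ni = dim_row Ai; si = dim_row Ah; nA = dim_row A; ri = dim_row As;
          mA = dim_col B; p = dim_row C;
          Atil = four_block_mat Ai (Bi * Ch) (Bh * Cmi) Ah;
          Btil = mat (ni + si) mA (\<lambda>(r, c). if r < ni then (Bi * Dh) $$ (r, c) else Eh $$ (r - ni, c));
          Ctil = mat p (ni + si) (\<lambda>(r, c). if c < ni then Ci $$ (r, c) else 0);
          Abar = four_block_mat A (B * Cs) (0\<^sub>m ri nA) As;
          Bbar = mat (nA + ri) mA (\<lambda>(r, c). if r < nA then B $$ (r, c) else 0);
          Cbar = mat p (nA + ri) (\<lambda>(r, c). if c < nA then C $$ (r, c) else 0)
      in nA + ri = ni + si \<and>
         (\<exists>T. T \<in> carrier_mat (ni + si) (ni + si) \<and> invertible_mat T \<and>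
              T * Atil = Abar * T \<and> T * Btil = Bbar \<and> Ctil = Cbar * T))"

end

theory Submission
  imports Defs "Jordan_Normal_Form.Spectral_Radius" "HOL-Library.Function_Algebras"
begin

text \<open>In the coordinates \<open>xb\<^sub>i\<close> of the interconnection form, every pre-compensated agent is a copy of
  the target model \<open>xb\<^sub>i(k+1) = A xb\<^sub>i(k) + B (v\<^sub>i(k) + d\<^sub>i(k))\<close> whose disturbance \<open>d\<^sub>i\<close> comes from a
  Schur stable exosystem and therefore vanishes. The observer error \<open>\<Sum>\<^sub>j d\<^sub>i\<^sub>j (xb\<^sub>i - xb\<^sub>j) - xh\<^sub>i\<close>
  obeys a recurrence through the Schur stable \<open>A - H C\<close> with vanishing input, so it vanishes as
  well. The differences \<open>\<Phi>\<^sub>i = xb\<^sub>i - \<eta>\<^sub>i\<close> then satisfy \<open>\<Phi>\<^sub>i(k+1) = A (D \<Phi>(k))\<^sub>i\<close> up to vanishing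
  terms, with the row stochastic \<open>D = [d\<^sub>i\<^sub>j]\<close>. Because \<open>D\<close> has a positive diagonal and its graph a
  spanning tree, \<open>D\<^sup>k\<close> shrinks disagreement geometrically, while the powers of \<open>A\<close> (spectrum in the
  closed unit disc) grow only polynomially; hence \<open>\<Phi>\<^sub>i - \<Phi>\<^sub>j \<rightarrow> 0\<close>. Now \<open>\<eta>\<^sub>i\<close> is driven through
  the Schur stable \<open>A - B K\<close> by a vanishing input, so \<open>\<eta>\<^sub>i \<rightarrow> 0\<close>, and
  \<open>y\<^sub>i - y\<^sub>j = C (\<Phi>\<^sub>i - \<Phi>\<^sub>j) + C (\<eta>\<^sub>i - \<eta>\<^sub>j) \<rightarrow> 0\<close>.\<close>

section \<open>Summability and convolutions\<close>

lemma summable_poly_times_geometric: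
  fixes \<beta> :: real
  assumes "0 \<le> \<beta>" and "\<beta> < 1"
  shows "summable (\<lambda>m. real (Suc m) ^ p * \<beta> ^ m)"
proof (cases "\<beta> = 0")
  case True
  then have "(\<lambda>m. real (Suc m) ^ p * \<beta> ^ m) = (\<lambda>m. if m = 0 then 1 else 0)"
    by (auto simp: fun_eq_iff)
  then show ?thesis by simp
next
  case False
  with assms have \<beta>: "0 < \<beta>" "\<beta> < 1" by auto
  define c where "c = (1 + \<beta>) / 2"
  have "(\<lambda>n. 1 / real (Suc n)) \<longlonglongrightarrow> 0"
    using LIMSEQ_Suc[OF lim_const_over_n[of 1]] by simp
  then have "(\<lambda>n. (1 + 1 / real (Suc n)) ^ p) \<longlonglongrightarrow> (1 + 0) ^ p"
    by (intro tendsto_intros)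
  moreover have "(1 + 0) ^ p < (1 + \<beta>) / (2 * \<beta>)" using \<beta> by (simp add: field_simps)
  ultimately have "\<forall>\<^sub>F n in sequentially. (1 + 1 / real (Suc n)) ^ p < (1 + \<beta>) / (2 * \<beta>)"
    by (rule order_tendstoD(2))
  then obtain N where N: "\<And>n. n \<ge> N \<Longrightarrow> (1 + 1 / real (Suc n)) ^ p < (1 + \<beta>) / (2 * \<beta>)"
    unfolding eventually_sequentially by blast
  show ?thesis
  proof (rule summable_ratio_test[of c N])
    show "c < 1" using \<beta> by (simp add: c_def)
    fix n assume "n \<ge> N"
    have "real (Suc (Suc n)) = real (Suc n) * (1 + 1 / real (Suc n))"
      by (simp add: field_simps)
    then have eq: "real (Suc (Suc n)) ^ p = real (Suc n) ^ p * (1 + 1 / real (Suc n)) ^ p"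
      by (simp only: power_mult_distrib)
    have "norm (real (Suc (Suc n)) ^ p * \<beta> ^ Suc n) =
        (1 + 1 / real (Suc n)) ^ p * \<beta> * (real (Suc n) ^ p * \<beta> ^ n)"
      using \<beta> unfolding eq by (simp add: abs_mult algebra_simps)
    also have "\<dots> \<le> (1 + \<beta>) / (2 * \<beta>) * \<beta> * (real (Suc n) ^ p * \<beta> ^ n)"
      using N[OF \<open>n \<ge> N\<close>] \<beta> by (intro mult_right_mono) auto
    also have "\<dots> = c * norm (real (Suc n) ^ p * \<beta> ^ n)"
      using \<beta> by (simp add: c_def)
    finally show "norm (real (Suc (Suc n)) ^ p * \<beta> ^ Suc n) \<le> c * norm (real (Suc n) ^ p * \<beta> ^ n)" .
  qed
qed

lemma summable_poly_bound_times_geometric: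
  fixes \<beta> :: real
  assumes "0 \<le> \<beta>" and "\<beta> < 1"
  shows "summable (\<lambda>m. \<beta> ^ m * (c1 + c2 * real m ^ p))"
proof (rule summable_comparison_test)
  show "summable (\<lambda>m. (\<bar>c1\<bar> + \<bar>c2\<bar>) * (real (Suc m) ^ p * \<beta> ^ m))"
    using summable_poly_times_geometric[OF assms] by (rule summable_mult)
  have "norm (\<beta> ^ m * (c1 + c2 * real m ^ p)) \<le> (\<bar>c1\<bar> + \<bar>c2\<bar>) * (real (Suc m) ^ p * \<beta> ^ m)" for m
  proof -
    have "1 \<le> real (Suc m) ^ p" "real m ^ p \<le> real (Suc m) ^ p"
      by (auto intro: one_le_power power_mono)
    then have "\<bar>c1\<bar> * 1 + \<bar>c2\<bar> * real m ^ p \<le> \<bar>c1\<bar> * real (Suc m) ^ p + \<bar>c2\<bar> * real (Suc m) ^ p"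
      by (intro add_mono mult_left_mono) auto
    moreover have "\<bar>c1 + c2 * real m ^ p\<bar> \<le> \<bar>c1\<bar> * 1 + \<bar>c2\<bar> * real m ^ p"
      using abs_triangle_ineq[of c1 "c2 * real m ^ p"] by (simp add: abs_mult)
    ultimately have "\<bar>c1 + c2 * real m ^ p\<bar> \<le> (\<bar>c1\<bar> + \<bar>c2\<bar>) * real (Suc m) ^ p"
      by (simp only: distrib_right)
    then have "\<beta> ^ m * \<bar>c1 + c2 * real m ^ p\<bar> \<le> \<beta> ^ m * ((\<bar>c1\<bar> + \<bar>c2\<bar>) * real (Suc m) ^ p)"
      using assms by (intro mult_left_mono) auto
    then show ?thesis
      using assms by (simp add: abs_mult mult_ac)
  qed
  then show "\<exists>N. \<forall>m\<ge>N. norm (\<beta> ^ m * (c1 + c2 * real m ^ p)) \<le> (\<bar>c1\<bar> + \<bar>c2\<bar>) * (real (Suc m) ^ p * \<beta> ^ m)"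
    by blast
qed

lemma summable_poly_times_geometric_div:
  fixes \<rho> :: real
  assumes "0 < \<rho>" "\<rho> < 1" "0 < L"
  shows "summable (\<lambda>m. (\<bar>c1\<bar> + \<bar>c2\<bar> * real m ^ p) * (2 * \<rho> ^ (m div L)))"
proof (rule summable_comparison_test)
  define \<beta> where "\<beta> = root L \<rho>"
  have \<beta>: "0 < \<beta>" "\<beta> < 1" "\<beta> ^ L = \<rho>"
    using assms by (auto simp: \<beta>_def real_root_lt_1_iff real_root_pow_pos2)
  show "summable (\<lambda>m. 2 / \<beta> ^ L * (\<beta> ^ m * (\<bar>c1\<bar> + \<bar>c2\<bar> * real m ^ p)))"
    using \<beta> by (intro summable_mult summable_poly_bound_times_geometric) auto
  \<comment> \<open>\<open>\<rho>^(m div L) = \<beta>^(L * (m div L))\<close> and \<open>L * (m div L) > m - L\<close>.\<close>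
  have "\<rho> ^ (m div L) \<le> \<beta> ^ m / \<beta> ^ L" for m
  proof -
    have "\<beta> ^ (L * (m div L)) * \<beta> ^ L \<le> \<beta> ^ (L * (m div L)) * \<beta> ^ (m mod L)"
      using \<beta> mod_less_divisor[OF \<open>0 < L\<close>, of m] by (intro mult_left_mono power_decreasing) auto
    also have "\<dots> = \<beta> ^ m" by (simp add: power_add[symmetric])
    finally show ?thesis using \<beta> \<open>0 < \<rho>\<close> by (simp add: power_mult field_simps mult.commute)
  qed
  then have "norm ((\<bar>c1\<bar> + \<bar>c2\<bar> * real m ^ p) * (2 * \<rho> ^ (m div L)))
      \<le> 2 / \<beta> ^ L * (\<beta> ^ m * (\<bar>c1\<bar> + \<bar>c2\<bar> * real m ^ p))" for m
    using assms \<beta> mult_left_mono[of "\<rho> ^ (m div L)" "\<beta> ^ m / \<beta> ^ L" "2 * (\<bar>c1\<bar> + \<bar>c2\<bar> * real m ^ p)"]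
    by (simp add: field_simps)
  then show "\<exists>N. \<forall>m\<ge>N. norm ((\<bar>c1\<bar> + \<bar>c2\<bar> * real m ^ p) * (2 * \<rho> ^ (m div L)))
      \<le> 2 / \<beta> ^ L * (\<beta> ^ m * (\<bar>c1\<bar> + \<bar>c2\<bar> * real m ^ p))" by blast
qed

lemma convolution_tendsto_zero:
  fixes b U :: "nat \<Rightarrow> real"
  assumes b: "\<And>m. 0 \<le> b m" "summable b" and U: "\<And>t. 0 \<le> U t" "U \<longlonglongrightarrow> 0"
  shows "(\<lambda>k. \<Sum>t<k. b (k - Suc t) * U t) \<longlonglongrightarrow> 0"
proof (rule LIMSEQ_I)
  fix \<epsilon> :: real assume "\<epsilon> > 0"
  define S where "S = suminf b + 1"
  have "0 \<le> suminf b" using b by (simp add: suminf_nonneg)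
  then have "S > 0" by (simp add: S_def)
  with \<open>\<epsilon> > 0\<close> obtain T where T: "\<And>t. t \<ge> T \<Longrightarrow> U t < \<epsilon> / (2 * S)"
    using LIMSEQ_D[OF U(2), of "\<epsilon> / (2 * S)"] by (auto simp: abs_less_iff)
  have "(\<lambda>k. \<Sum>t<T. b (k - Suc t) * U t) \<longlonglongrightarrow> 0"
    by (intro tendsto_null_sum tendsto_mult_left_zero
        filterlim_compose[OF summable_LIMSEQ_zero[OF b(2)] filterlim_minus_const_nat_at_top])
  from LIMSEQ_D[OF this, of "\<epsilon> / 2"] \<open>\<epsilon> > 0\<close> obtain K
    where K: "\<And>k. k \<ge> K \<Longrightarrow> norm ((\<Sum>t<T. b (k - Suc t) * U t) - 0) < \<epsilon> / 2"
    by auto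
  show "\<exists>no. \<forall>k\<ge>no. norm ((\<Sum>t<k. b (k - Suc t) * U t) - 0) < \<epsilon>"
  proof (intro exI allI impI)
    fix k assume k: "k \<ge> max K T"
    have "(\<Sum>t<k. b (k - Suc t) * U t) =
        (\<Sum>t<T. b (k - Suc t) * U t) + (\<Sum>t\<in>{T..<k}. b (k - Suc t) * U t)"
      using k by (simp add: lessThan_atLeast0 sum.atLeastLessThan_concat)
    also have "(\<Sum>t\<in>{T..<k}. b (k - Suc t) * U t) \<le> (\<Sum>t<k. b (k - Suc t)) * (\<epsilon> / (2 * S))"
    proof -
      have "(\<Sum>t\<in>{T..<k}. b (k - Suc t) * U t) \<le> (\<Sum>t\<in>{T..<k}. b (k - Suc t) * (\<epsilon> / (2 * S)))"
        using T b by (intro sum_mono mult_left_mono) (auto intro: less_imp_le)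
      also have "\<dots> \<le> (\<Sum>t<k. b (k - Suc t) * (\<epsilon> / (2 * S)))"
        using b \<open>\<epsilon> > 0\<close> \<open>S > 0\<close> by (intro sum_mono2) auto
      finally show ?thesis by (simp only: sum_distrib_right)
    qed
    also have "(\<Sum>t<k. b (k - Suc t)) = (\<Sum>t<k. b t)" by (rule sum.nat_diff_reindex)
    also have "(\<Sum>t<k. b t) * (\<epsilon> / (2 * S)) \<le> suminf b * (\<epsilon> / (2 * S))"
      using b \<open>\<epsilon> > 0\<close> \<open>S > 0\<close> by (intro mult_right_mono sum_le_suminf) auto
    also have "suminf b * (\<epsilon> / (2 * S)) < \<epsilon> / 2"
      using \<open>\<epsilon> > 0\<close> \<open>S > 0\<close> by (simp add: S_def field_simps)
    finally have "(\<Sum>t<k. b (k - Suc t) * U t) < \<epsilon>" using K[of k] k by simp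
    moreover have "0 \<le> (\<Sum>t<k. b (k - Suc t) * U t)" using b U by (simp add: sum_nonneg)
    ultimately show "norm ((\<Sum>t<k. b (k - Suc t) * U t) - 0) < \<epsilon>" by simp
  qed
qed

lemma convolution_bound_tendsto_zero:
  fixes z b U :: "nat \<Rightarrow> real"
  assumes "\<And>k. \<bar>z k\<bar> \<le> b k * c + (\<Sum>t<k. b (k - Suc t) * U t)"
    and "\<And>m. 0 \<le> b m" "summable b" "U \<longlonglongrightarrow> 0" "\<And>t. 0 \<le> U t"
  shows "z \<longlonglongrightarrow> 0"
proof (rule tendsto_0_le)
  show "(\<lambda>k. b k * c + (\<Sum>t<k. b (k - Suc t) * U t)) \<longlonglongrightarrow> 0"
    using assms(2-5) summable_LIMSEQ_zero[OF assms(3)]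
    by (intro tendsto_add_zero tendsto_mult_left_zero convolution_tendsto_zero) auto
  show "\<forall>\<^sub>F k in sequentially. norm (z k) \<le> norm (b k * c + (\<Sum>t<k. b (k - Suc t) * U t)) * 1"
    using assms(1) by (intro always_eventually allI) (metis abs_ge_self mult_1_right order_trans real_norm_def)
qed

section \<open>Growth of matrix powers\<close>

lemma eigenvalue_smult_mat:
  fixes M :: "'a::comm_ring_1 mat"
  assumes "eigenvalue M e" and M: "M \<in> carrier_mat n n"
  shows "eigenvalue (c \<cdot>\<^sub>m M) (c * e)"
proof -
  from assms obtain v where v: "v \<in> carrier_vec (dim_row M)" "v \<noteq> 0\<^sub>v (dim_row M)" "M *\<^sub>v v = e \<cdot>\<^sub>v v"
    unfolding eigenvalue_def eigenvector_def by auto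
  have "(c \<cdot>\<^sub>m M) *\<^sub>v v = c \<cdot>\<^sub>v (M *\<^sub>v v)"
    using v(1) M by (intro eq_vecI) (auto simp: scalar_prod_def sum_distrib_left mult.assoc)
  also have "\<dots> = (c * e) \<cdot>\<^sub>v v" using v(3) by (simp add: smult_smult_assoc)
  finally show ?thesis using v unfolding eigenvalue_def eigenvector_def by auto
qed

lemma smult_pow_mat:
  assumes "(M :: 'a::comm_ring_1 mat) \<in> carrier_mat n n"
  shows "(c \<cdot>\<^sub>m M) ^\<^sub>m k = (c ^ k) \<cdot>\<^sub>m (M ^\<^sub>m k)"
proof (induction k)
  case (Suc k)
  then show ?case
    by (intro eq_matI) (use assms in \<open>auto simp: scalar_prod_def sum_distrib_left algebra_simps intro!: sum.cong\<close>)
qed (use assms in \<open>auto simp: mat_eq_iff\<close>)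

lemma pow_mat_Suc_left:
  assumes "M \<in> carrier_mat n n"
  shows "M ^\<^sub>m Suc k = M * M ^\<^sub>m k"
proof (induction k)
  case (Suc k)
  have "M ^\<^sub>m Suc (Suc k) = (M * M ^\<^sub>m k) * M" using Suc by simp
  also have "\<dots> = M * (M ^\<^sub>m k * M)" using assms by (intro assoc_mult_mat[of _ n n _ n _ n]) auto
  finally show ?case by simp
qed (use assms in simp)

lemma pow_mat_entry_poly_bound:
  fixes M :: "real mat"
  assumes M: "M \<in> carrier_mat n n" and "R > 0"
    and ev: "\<And>e. eigenvalue (map_mat complex_of_real M) e \<Longrightarrow> cmod e \<le> R"
  shows "\<exists>c1 c2. \<forall>k i j. i < n \<longrightarrow> j < n \<longrightarrow>
           \<bar>(M ^\<^sub>m k) $$ (i, j)\<bar> \<le> R ^ k * (c1 + c2 * real k ^ (n - 1))"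
proof (cases "n = 0")
  case False
  define Mc where "Mc = map_mat complex_of_real M"
  define S where "S = complex_of_real (1 / R) \<cdot>\<^sub>m Mc"
  have Mc: "Mc \<in> carrier_mat n n" and S: "S \<in> carrier_mat n n"
    using M by (auto simp: Mc_def S_def)
  \<comment> \<open>The rescaled matrix has spectral radius at most 1, so its powers grow at most polynomially.\<close>
  have "spectral_radius S \<le> 1"
  proof -
    from spectral_radius_mem_max(1)[OF S] False obtain e
      where e: "eigenvalue S e" and sr: "spectral_radius S = cmod e"
      unfolding spectrum_def by auto
    have "eigenvalue (complex_of_real R \<cdot>\<^sub>m S) (complex_of_real R * e)"
      using eigenvalue_smult_mat[OF e S] .
    moreover have "complex_of_real R \<cdot>\<^sub>m S = Mc"
      using \<open>R > 0\<close> Mc by (intro eq_matI) (auto simp: S_def)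
    ultimately have "R * cmod e \<le> R"
      using ev \<open>R > 0\<close> by (fastforce simp: Mc_def norm_mult)
    then show ?thesis using sr \<open>R > 0\<close> by simp
  qed
  from spectral_radius_jnf_norm_bound_le_1_upper_triangular[OF S this]
  obtain c1 c2 where bound: "\<And>k. norm_bound (S ^\<^sub>m k) (c1 + c2 * of_nat k ^ (n - 1))"
    by auto
  have "\<bar>(M ^\<^sub>m k) $$ (i, j)\<bar> \<le> R ^ k * (c1 + c2 * real k ^ (n - 1))" if "i < n" "j < n" for k i j
  proof -
    have "S ^\<^sub>m k = complex_of_real (1 / R) ^ k \<cdot>\<^sub>m Mc ^\<^sub>m k"
      unfolding S_def by (rule smult_pow_mat[OF Mc])
    also have "Mc ^\<^sub>m k = map_mat complex_of_real (M ^\<^sub>m k)"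
      unfolding Mc_def by (rule of_real_hom.mat_hom_pow[OF M, symmetric])
    finally have "(1 / R) ^ k * \<bar>(M ^\<^sub>m k) $$ (i, j)\<bar> = cmod ((S ^\<^sub>m k) $$ (i, j))"
      using that M \<open>R > 0\<close> by (simp add: norm_mult norm_power norm_divide)
    also have "\<dots> \<le> c1 + c2 * real k ^ (n - 1)"
      using bound[of k] that S unfolding norm_bound_def by auto
    finally show ?thesis
      using \<open>R > 0\<close> by (simp add: field_simps)
  qed
  then show ?thesis by blast
qed simp

lemma schur_stable_pow_summable_bound:
  fixes M :: "real mat"
  assumes M: "M \<in> carrier_mat n n" and "schur_stable M"
  shows "\<exists>bd. summable bd \<and> (\<forall>m. 0 \<le> bd m) \<and>
           (\<forall>m i j. i < n \<longrightarrow> j < n \<longrightarrow> \<bar>(M ^\<^sub>m m) $$ (i, j)\<bar> \<le> bd m)"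
proof (cases "n = 0")
  case False
  define Mc where "Mc = map_mat complex_of_real M"
  define R where "R = (1 + spectral_radius Mc) / 2"
  have Mc: "Mc \<in> carrier_mat n n" using M by (simp add: Mc_def)
  from spectral_radius_mem_max(1)[OF Mc] False obtain e
    where "eigenvalue Mc e" and sr: "spectral_radius Mc = cmod e"
    unfolding spectrum_def by auto
  then have "spectral_radius Mc < 1"
    using \<open>schur_stable M\<close> by (simp add: schur_stable_def Mc_def)
  moreover have "0 \<le> spectral_radius Mc" using sr by simp
  ultimately have R: "0 < R" "R < 1" by (auto simp: R_def)
  have "cmod e' \<le> R" if "eigenvalue Mc e'" for e'
    using spectral_radius_mem_max(2)[OF Mc] that \<open>spectral_radius Mc < 1\<close> False
    by (fastforce simp: R_def spectrum_def)
  with pow_mat_entry_poly_bound[OF M \<open>0 < R\<close>] obtain c1 c2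
    where c: "\<And>k i j. i < n \<Longrightarrow> j < n \<Longrightarrow> \<bar>(M ^\<^sub>m k) $$ (i, j)\<bar> \<le> R ^ k * (c1 + c2 * real k ^ (n - 1))"
    unfolding Mc_def by blast
  show ?thesis
  proof (intro exI conjI allI impI)
    show "summable (\<lambda>m. R ^ m * (\<bar>c1\<bar> + \<bar>c2\<bar> * real m ^ (n - 1)))"
      using R by (intro summable_poly_bound_times_geometric) auto
    fix m show "0 \<le> R ^ m * (\<bar>c1\<bar> + \<bar>c2\<bar> * real m ^ (n - 1))" using R by simp
    fix i j assume "i < n" "j < n"
    have "R ^ m * (c1 + c2 * real m ^ (n - 1)) \<le> R ^ m * (\<bar>c1\<bar> + \<bar>c2\<bar> * real m ^ (n - 1))"
      using R by (intro mult_left_mono add_mono mult_right_mono) auto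
    with c[OF \<open>i < n\<close> \<open>j < n\<close>, of m]
    show "\<bar>(M ^\<^sub>m m) $$ (i, j)\<bar> \<le> R ^ m * (\<bar>c1\<bar> + \<bar>c2\<bar> * real m ^ (n - 1))" by linarith
  qed
qed auto

section \<open>Matrices acting on coordinate functions\<close>

text \<open>Vectors are represented by their coordinate functions, padded with zeros beyond the dimension,
  so that equations between them hold pointwise everywhere and can be manipulated in the
  ring of functions.\<close>

definition mat_app :: "'a::comm_ring_1 mat \<Rightarrow> (nat \<Rightarrow> 'a) \<Rightarrow> nat \<Rightarrow> 'a" where
  "mat_app M f l = (if l < dim_row M then \<Sum>c<dim_col M. M $$ (l, c) * f c else 0)"

lemma mat_app_cong: "(\<And>c. c < dim_col M \<Longrightarrow> f c = g c) \<Longrightarrow> mat_app M f = mat_app M g"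
  unfolding mat_app_def by (intro ext) auto

lemma mat_app_add [simp]: "mat_app M (f + g) = mat_app M f + mat_app M g"
  by (intro ext) (simp add: mat_app_def distrib_left sum.distrib)

lemma mat_app_diff [simp]: "mat_app M (f - g) = mat_app M f - mat_app M g"
  by (intro ext) (simp add: mat_app_def right_diff_distrib sum_subtractf)

lemma mat_app_mult:
  assumes "dim_col M = dim_row M'"
  shows "mat_app (M * M') f = mat_app M (mat_app M' f)"
proof (intro ext)
  fix l
  show "mat_app (M * M') f l = mat_app M (mat_app M' f) l"
    using assms
    by (auto simp: mat_app_def scalar_prod_def sum_distrib_left sum_distrib_right
        atLeast0LessThan mult.assoc intro: sum.swap)
qed

lemma mat_app_minus_mat:
  assumes "M \<in> carrier_mat n m" "M' \<in> carrier_mat n m"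
  shows "mat_app (M - M') f = mat_app M f - mat_app M' f"
  using assms by (intro ext) (auto simp: mat_app_def left_diff_distrib sum_subtractf)

lemma mat_app_diff_mult_mat:
  assumes "A \<in> carrier_mat n n" "B \<in> carrier_mat n m" "K \<in> carrier_mat m n"
  shows "mat_app (A - B * K) f = mat_app A f - mat_app B (mat_app K f)"
  using assms by (simp add: mat_app_minus_mat[of A n n "B * K"] mat_app_mult)

lemma mat_app_one: "mat_app (1\<^sub>m n) f l = (if l < n then f l else 0)"
  by (auto simp: mat_app_def if_distrib[of "\<lambda>x. x * _"] cong: if_cong)

lemma mat_app_pow_Suc:
  assumes "M \<in> carrier_mat n n"
  shows "mat_app M (mat_app (M ^\<^sub>m k) f) = mat_app (M ^\<^sub>m Suc k) f"
  unfolding pow_mat_Suc_left[OF assms] using assms by (subst mat_app_mult) auto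

lemma abs_mat_app_le:
  fixes M :: "'a::linordered_idom mat"
  assumes "\<And>c. c < dim_col M \<Longrightarrow> \<bar>M $$ (l, c)\<bar> \<le> b"
  shows "\<bar>mat_app M f l\<bar> \<le> b * (\<Sum>c<dim_col M. \<bar>f c\<bar>)"
proof (cases "l < dim_row M")
  case True
  have "\<bar>mat_app M f l\<bar> \<le> (\<Sum>c<dim_col M. \<bar>M $$ (l, c)\<bar> * \<bar>f c\<bar>)"
    using True sum_abs[of "\<lambda>c. M $$ (l, c) * f c" "{..<dim_col M}"] by (simp add: mat_app_def abs_mult)
  also have "\<dots> \<le> (\<Sum>c<dim_col M. b * \<bar>f c\<bar>)"
    using assms by (intro sum_mono mult_right_mono) auto
  finally show ?thesis by (simp add: sum_distrib_left)
next
  case False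
  have "0 \<le> b * (\<Sum>c<dim_col M. \<bar>f c\<bar>)"
  proof (cases "dim_col M = 0")
    case False
    then have "0 \<le> b" using assms[of 0] by linarith
    then show ?thesis by (simp add: sum_nonneg)
  qed simp
  with False show ?thesis by (simp add: mat_app_def)
qed

definition coords :: "'a::zero vec \<Rightarrow> nat \<Rightarrow> 'a" where
  "coords v l = (if l < dim_vec v then v $ l else 0)"

lemma coords_mult_mat_vec:
  "dim_vec v = dim_col M \<Longrightarrow> coords (M *\<^sub>v v) = mat_app M (coords v)"
  by (intro ext) (auto simp: coords_def mat_app_def scalar_prod_def atLeast0LessThan row_def intro!: sum.cong)

lemma coords_add: "dim_vec (v :: 'a::monoid_add vec) = dim_vec w \<Longrightarrow> coords (v + w) = coords v + coords w"
  by (intro ext) (simp add: coords_def)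

lemma coords_diff: "dim_vec (v :: 'a::group_add vec) = dim_vec w \<Longrightarrow> coords (v - w) = coords v - coords w"
  by (intro ext) (simp add: coords_def)

lemma mat_app_sum_apply: "mat_app M (\<lambda>c. \<Sum>t\<in>S. g t c) l = (\<Sum>t\<in>S. mat_app M (g t) l)"
  by (simp add: mat_app_def sum_distrib_left sum.swap[of _ S])

lemma mat_app_add_sum_apply:
  "mat_app M (\<lambda>c. f c + (\<Sum>t\<in>S. g t c)) l = mat_app M f l + (\<Sum>t\<in>S. mat_app M (g t) l)"
proof -
  have "(\<lambda>c. f c + (\<Sum>t\<in>S. g t c)) = f + (\<lambda>c. \<Sum>t\<in>S. g t c)" by (simp add: plus_fun_def)
  then show ?thesis by (simp add: mat_app_sum_apply)
qed

lemma mat_app_linear_recurrence: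
  assumes M: "M \<in> carrier_mat n n" and rec: "\<And>k. z (Suc k) = mat_app M (z k) + u k"
  shows "l < n \<Longrightarrow> z k l = mat_app (M ^\<^sub>m k) (z 0) l + (\<Sum>t<k. mat_app (M ^\<^sub>m (k - Suc t)) (u t) l)"
proof (induction k arbitrary: l)
  case 0
  then show ?case using M by (simp add: mat_app_one)
next
  case (Suc k)
  have "mat_app M (z k) =
      mat_app M (\<lambda>c. mat_app (M ^\<^sub>m k) (z 0) c + (\<Sum>t<k. mat_app (M ^\<^sub>m (k - Suc t)) (u t) c))"
    using Suc.IH M by (intro mat_app_cong) auto
  then have "z (Suc k) l = mat_app (M ^\<^sub>m Suc k) (z 0) l
      + (\<Sum>t<k. mat_app (M ^\<^sub>m Suc (k - Suc t)) (u t) l) + u k l"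
    using rec[of k] by (simp add: mat_app_add_sum_apply mat_app_pow_Suc[OF M])
  moreover have "u k l = mat_app (M ^\<^sub>m (Suc k - Suc k)) (u k) l"
    using Suc.prems M by (simp add: mat_app_one)
  moreover have "(\<Sum>t<k. mat_app (M ^\<^sub>m Suc (k - Suc t)) (u t) l)
      = (\<Sum>t<k. mat_app (M ^\<^sub>m (Suc k - Suc t)) (u t) l)"
    by (intro sum.cong) (auto simp: Suc_diff_Suc)
  ultimately show ?case by simp
qed

definition vanishes :: "nat \<Rightarrow> (nat \<Rightarrow> nat \<Rightarrow> real) \<Rightarrow> bool" where
  "vanishes n z \<longleftrightarrow> (\<forall>l<n. (\<lambda>k. z k l) \<longlonglongrightarrow> 0)"

lemma vanishes_add: "vanishes n z \<Longrightarrow> vanishes n w \<Longrightarrow> vanishes n (\<lambda>k. z k + w k)"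
  by (auto simp: vanishes_def intro: tendsto_add_zero)

lemma vanishes_diff: "vanishes n z \<Longrightarrow> vanishes n w \<Longrightarrow> vanishes n (\<lambda>k. z k - w k)"
  using tendsto_diff[of _ 0 sequentially _ 0] by (auto simp: vanishes_def)

lemma vanishes_zero: "vanishes n (\<lambda>k. 0)"
  by (simp add: vanishes_def)

lemma vanishes_mat_app:
  assumes "vanishes (dim_col M) z"
  shows "vanishes m (\<lambda>k. mat_app M (z k))"
  unfolding vanishes_def
proof (intro allI impI)
  fix l
  show "(\<lambda>k. mat_app M (z k) l) \<longlonglongrightarrow> 0"
  proof (cases "l < dim_row M")
    case True
    then show ?thesis
      using assms unfolding mat_app_def vanishes_def by (auto intro!: tendsto_null_sum tendsto_mult_right_zero)
  qed (simp add: mat_app_def)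
qed

lemma schur_stable_input_to_state:
  assumes M: "M \<in> carrier_mat n n" and "schur_stable M"
    and rec: "\<And>k. z (Suc k) = mat_app M (z k) + u k" and "vanishes n u"
  shows "vanishes n z"
  unfolding vanishes_def
proof (intro allI impI)
  fix l assume "l < n"
  from schur_stable_pow_summable_bound[OF M \<open>schur_stable M\<close>] obtain bd
    where bd: "summable bd" "\<And>m. 0 \<le> bd m" "\<And>m i j. i < n \<Longrightarrow> j < n \<Longrightarrow> \<bar>(M ^\<^sub>m m) $$ (i, j)\<bar> \<le> bd m"
    by blast
  define U where "U t = (\<Sum>c<n. \<bar>u t c\<bar>)" for t
  have "\<bar>mat_app (M ^\<^sub>m m) f l\<bar> \<le> bd m * (\<Sum>c<n. \<bar>f c\<bar>)" for m f
  proof -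
    have "dim_col (M ^\<^sub>m m) = n" using M by simp
    then show ?thesis using abs_mat_app_le[of "M ^\<^sub>m m" l "bd m" f] bd(3) \<open>l < n\<close> by auto
  qed
  then have bound: "\<bar>z k l\<bar> \<le> bd k * (\<Sum>c<n. \<bar>z 0 c\<bar>) + (\<Sum>t<k. bd (k - Suc t) * U t)" for k
    unfolding mat_app_linear_recurrence[where z = z and u = u, OF M rec \<open>l < n\<close>, of k] U_def
    by (intro order_trans[OF abs_triangle_ineq] add_mono order_trans[OF sum_abs] sum_mono)
  have "U \<longlonglongrightarrow> 0"
    using \<open>vanishes n u\<close> unfolding U_def vanishes_def by (auto intro!: tendsto_null_sum tendsto_rabs_zero)
  then show "(\<lambda>k. z k l) \<longlonglongrightarrow> 0"
    by (rule convolution_bound_tendsto_zero[OF bound bd(2,1)]) (simp add: U_def sum_nonneg)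
qed

section \<open>Averaging over a graph with a spanning tree\<close>

text \<open>A family \<open>v\<close> assigns to every agent \<open>j\<close> a coordinate function \<open>v j\<close>.\<close>

definition avg :: "nat \<Rightarrow> (nat \<Rightarrow> nat \<Rightarrow> real) \<Rightarrow> (nat \<Rightarrow> nat \<Rightarrow> real) \<Rightarrow> nat \<Rightarrow> nat \<Rightarrow> real" where
  "avg N d v i l = (\<Sum>j<N. d i j * v j l)"

definition disagreement ::
  "nat \<Rightarrow> (nat \<Rightarrow> nat \<Rightarrow> real) \<Rightarrow> (nat \<Rightarrow> nat \<Rightarrow> real) \<Rightarrow> nat \<Rightarrow> nat \<Rightarrow> real" where
  "disagreement N d v i l = (\<Sum>j<N. d i j * (v i l - v j l))"

lemma avg_pow_Suc: "(avg N d ^^ Suc k) v i l = (\<Sum>j<N. d i j * (avg N d ^^ k) v j l)"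
  unfolding funpow.simps(2) o_apply avg_def[of N d "(avg N d ^^ k) v" i l] ..

lemma mat_app_avg: "mat_app M (avg N d v i) = avg N d (\<lambda>j. mat_app M (v j)) i"
  by (intro ext)
    (simp add: mat_app_def avg_def sum_distrib_left sum.swap[of _ "{..<N}"] mult.left_commute)

lemma mat_app_disagreement:
  "mat_app M (disagreement N d v i) = disagreement N d (\<lambda>j. mat_app M (v j)) i"
  by (intro ext) (simp add: mat_app_def disagreement_def sum_distrib_left right_diff_distrib
      sum_subtractf sum.swap[of _ "{..<N}"] mult.left_commute)

lemma disagreement_diff:
  "disagreement N d (\<lambda>j. v j - w j) i = disagreement N d v i - disagreement N d w i"
  by (intro ext) (simp add: disagreement_def sum_subtractf[symmetric] algebra_simps)

lemma disagreement_cong: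
  "(\<And>j. j < N \<Longrightarrow> v j = w j) \<Longrightarrow> i < N \<Longrightarrow> disagreement N d v i = disagreement N d w i"
  by (intro ext) (simp add: disagreement_def)

lemma disagreement_add:
  "disagreement N d (\<lambda>j. v j + w j) i = disagreement N d v i + disagreement N d w i"
  by (intro ext) (simp add: disagreement_def sum.distrib[symmetric] algebra_simps)

lemma vanishes_disagreement:
  assumes "\<And>j. j < N \<Longrightarrow> vanishes n (\<lambda>k. z k i - z k j)"
  shows "vanishes n (\<lambda>k. disagreement N d (z k) i)"
  using assms unfolding vanishes_def disagreement_def
  by (auto intro!: tendsto_null_sum tendsto_mult_right_zero)

lemma coords_vec_disagreement:
  assumes "\<And>j. j < N \<Longrightarrow> dim_vec (v j) = n" and "i < N"
  shows "coords (vec n (\<lambda>l. \<Sum>j<N. d i j * (v i $ l - v j $ l))) = disagreement N d (\<lambda>j. coords (v j)) i"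
  using assms by (intro ext) (auto simp: coords_def disagreement_def intro!: sum.cong)

lemma avg_linear_recurrence:
  assumes A: "A \<in> carrier_mat n n"
    and rec: "\<And>k i. i < N \<Longrightarrow> \<Phi> (Suc k) i = mat_app A (avg N d (\<Phi> k) i) + U k i"
  shows "i < N \<Longrightarrow> l < n \<Longrightarrow> \<Phi> k i l = mat_app (A ^\<^sub>m k) ((avg N d ^^ k) (\<Phi> 0) i) l
           + (\<Sum>t<k. mat_app (A ^\<^sub>m (k - Suc t)) ((avg N d ^^ (k - Suc t)) (U t) i) l)"
proof (induction k arbitrary: i l)
  case 0
  then show ?case using A by (simp add: mat_app_one)
next
  case (Suc k)
  define F where "F = (\<lambda>j. mat_app (A ^\<^sub>m k) ((avg N d ^^ k) (\<Phi> 0) j))"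
  define G where "G = (\<lambda>t j. mat_app (A ^\<^sub>m (k - Suc t)) ((avg N d ^^ (k - Suc t)) (U t) j))"
  have "avg N d (\<Phi> k) i c = avg N d F i c + (\<Sum>t<k. avg N d (G t) i c)" if "c < n" for c
  proof -
    have "avg N d (\<Phi> k) i c = (\<Sum>j<N. d i j * (F j c + (\<Sum>t<k. G t j c)))"
      unfolding avg_def using Suc.IH \<open>c < n\<close> by (intro sum.cong) (auto simp: F_def G_def)
    then show ?thesis
      by (simp add: avg_def distrib_left sum.distrib sum_distrib_left sum.swap[of _ "{..<k}"])
  qed
  moreover have "avg N d F i = mat_app (A ^\<^sub>m k) ((avg N d ^^ Suc k) (\<Phi> 0) i)"
    by (simp add: F_def mat_app_avg)
  moreover have "avg N d (G t) i = mat_app (A ^\<^sub>m (k - Suc t)) ((avg N d ^^ Suc (k - Suc t)) (U t) i)" for t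
    by (simp add: G_def mat_app_avg)
  ultimately have "mat_app A (avg N d (\<Phi> k) i) = mat_app A (\<lambda>c. mat_app (A ^\<^sub>m k) ((avg N d ^^ Suc k) (\<Phi> 0) i) c
      + (\<Sum>t<k. mat_app (A ^\<^sub>m (k - Suc t)) ((avg N d ^^ Suc (k - Suc t)) (U t) i) c))"
    using A by (intro mat_app_cong) auto
  then have "\<Phi> (Suc k) i l = mat_app (A ^\<^sub>m Suc k) ((avg N d ^^ Suc k) (\<Phi> 0) i) l
      + (\<Sum>t<k. mat_app (A ^\<^sub>m Suc (k - Suc t)) ((avg N d ^^ Suc (k - Suc t)) (U t) i) l) + U k i l"
    using rec[OF Suc.prems(1), of k] by (simp add: mat_app_add_sum_apply mat_app_pow_Suc[OF A])
  moreover have "U k i l = mat_app (A ^\<^sub>m (Suc k - Suc k)) ((avg N d ^^ (Suc k - Suc k)) (U k) i) l"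
    using Suc.prems A by (simp add: mat_app_one)
  moreover have "(\<Sum>t<k. mat_app (A ^\<^sub>m Suc (k - Suc t)) ((avg N d ^^ Suc (k - Suc t)) (U t) i) l)
      = (\<Sum>t<k. mat_app (A ^\<^sub>m (Suc k - Suc t)) ((avg N d ^^ (Suc k - Suc t)) (U t) i) l)"
    by (intro sum.cong) (auto simp: Suc_diff_Suc)
  ultimately show ?case by simp
qed

locale row_stochastic =
  fixes N :: nat and d :: "nat \<Rightarrow> nat \<Rightarrow> real"
  assumes nonneg: "\<And>i j. i < N \<Longrightarrow> j < N \<Longrightarrow> 0 \<le> d i j"
    and row_sum: "\<And>i. i < N \<Longrightarrow> (\<Sum>j<N. d i j) = 1"
begin

lemma disagreement_eq: "i < N \<Longrightarrow> disagreement N d v i = v i - avg N d v i"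
  by (intro ext) (simp add: disagreement_def avg_def right_diff_distrib sum_subtractf
      sum_distrib_right[symmetric] row_sum)

lemma avg_pow_affine:
  "i < N \<Longrightarrow> (avg N d ^^ k) (\<lambda>j l. c + s * v j l) i l = c + s * (avg N d ^^ k) v i l"
proof (induction k arbitrary: i)
  case (Suc k)
  have "(avg N d ^^ Suc k) (\<lambda>j l. c + s * v j l) i l
      = (\<Sum>j<N. d i j * (c + s * (avg N d ^^ k) v j l))"
    unfolding avg_pow_Suc using Suc.IH by (intro sum.cong) auto
  also have "\<dots> = (\<Sum>j<N. d i j) * c + s * (\<Sum>j<N. d i j * (avg N d ^^ k) v j l)"
    by (simp add: algebra_simps sum.distrib sum_distrib_left sum_distrib_right)
  also have "(\<Sum>j<N. d i j * (avg N d ^^ k) v j l) = (avg N d ^^ Suc k) v i l"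
    by (rule avg_pow_Suc[symmetric])
  finally show ?case using row_sum[OF Suc.prems] by simp
qed simp

lemma avg_pow_nonneg: "(\<And>j. j < N \<Longrightarrow> 0 \<le> v j l) \<Longrightarrow> i < N \<Longrightarrow> 0 \<le> (avg N d ^^ k) v i l"
proof (induction k arbitrary: i)
  case (Suc k)
  then show ?case unfolding avg_pow_Suc by (auto intro!: sum_nonneg simp: nonneg)
qed simp

lemma avg_pow_bounds:
  assumes "\<And>j. j < N \<Longrightarrow> a \<le> v j l \<and> v j l \<le> b" and "i < N"
  shows "a \<le> (avg N d ^^ k) v i l \<and> (avg N d ^^ k) v i l \<le> b"
proof
  have "0 \<le> (avg N d ^^ k) (\<lambda>j l. - a + 1 * v j l) i l"
    using assms by (intro avg_pow_nonneg) auto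
  then show "a \<le> (avg N d ^^ k) v i l"
    unfolding avg_pow_affine[OF assms(2)] by simp
  have "0 \<le> (avg N d ^^ k) (\<lambda>j l. b + (- 1) * v j l) i l"
    using assms by (intro avg_pow_nonneg) auto
  then show "(avg N d ^^ k) v i l \<le> b"
    unfolding avg_pow_affine[OF assms(2)] by simp
qed

end

locale rooted_averaging = row_stochastic +
  fixes root :: nat and parent :: "nat \<Rightarrow> nat"
  assumes root_node: "root < N"
    and diag_pos: "\<And>i. i < N \<Longrightarrow> 0 < d i i"
    and parent_edge: "\<And>i. i < N \<Longrightarrow> i \<noteq> root \<Longrightarrow> parent i < N \<and> 0 < d i (parent i)"
    and reaches_root: "\<And>i. i < N \<Longrightarrow> \<exists>k. (parent ^^ k) i = root"
begin

lemma weight_floor: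
  obtains \<gamma> where "0 < \<gamma>" "\<gamma> < 1" "\<And>i. i < N \<Longrightarrow> \<gamma> \<le> d i i"
    "\<And>i. i < N \<Longrightarrow> i \<noteq> root \<Longrightarrow> \<gamma> \<le> d i (parent i)"
proof -
  define W where "W = (\<lambda>i. d i i) ` {..<N} \<union> (\<lambda>i. d i (parent i)) ` {i. i < N \<and> i \<noteq> root}"
  have W: "finite W" "W \<noteq> {}" "\<And>w. w \<in> W \<Longrightarrow> 0 < w"
    using root_node diag_pos parent_edge by (auto simp: W_def)
  show ?thesis
  proof (rule that[of "min (Min W) (1/2)"])
    show "0 < min (Min W) (1/2)" using W by simp
    show "min (Min W) (1/2) \<le> d i i" if "i < N" for i
      using W(1) that by (intro min.coboundedI1 Min_le) (auto simp: W_def)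
    show "min (Min W) (1/2) \<le> d i (parent i)" if "i < N" "i \<noteq> root" for i
      using W(1) that by (intro min.coboundedI1 Min_le) (auto simp: W_def)
  qed simp
qed

lemma uniform_depth: obtains L where "0 < L" "\<And>i. i < N \<Longrightarrow> \<exists>m\<le>L. (parent ^^ m) i = root"
proof -
  define depth where "depth i = (SOME k. (parent ^^ k) i = root)" for i
  have "(parent ^^ depth i) i = root" if "i < N" for i
    using someI_ex[OF reaches_root[OF that]] by (simp add: depth_def)
  moreover have "depth i \<le> (\<Sum>i<N. depth i)" if "i < N" for i
    using that by (intro member_le_sum) auto
  ultimately show ?thesis
    by (intro that[of "Suc (\<Sum>i<N. depth i)"]) (auto intro: le_SucI)
qed

text \<open>Mass at the root is propagated along the tree, losing at most a factor \<open>\<gamma>\<close> per step.\<close>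
lemma avg_pow_ge_root:
  assumes \<gamma>: "0 \<le> \<gamma>" "\<And>i. i < N \<Longrightarrow> \<gamma> \<le> d i i" "\<And>i. i < N \<Longrightarrow> i \<noteq> root \<Longrightarrow> \<gamma> \<le> d i (parent i)"
    and v: "\<And>j. j < N \<Longrightarrow> 0 \<le> v j l"
  shows "i < N \<Longrightarrow> \<exists>m\<le>k. (parent ^^ m) i = root \<Longrightarrow> \<gamma> ^ k * v root l \<le> (avg N d ^^ k) v i l"
proof (induction k arbitrary: i)
  case 0
  then show ?case by simp
next
  case (Suc k)
  have nn: "0 \<le> (avg N d ^^ k) v j l" if "j < N" for j
    by (rule avg_pow_nonneg[where v = v, OF v that])
  have step: "d i j * (avg N d ^^ k) v j l \<le> (avg N d ^^ Suc k) v i l" if "j < N" for j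
    unfolding avg_pow_Suc using that nn nonneg[OF Suc.prems(1)]
    by (intro member_le_sum[of j "{..<N}" "\<lambda>j. d i j * (avg N d ^^ k) v j l"]) auto
  obtain j where j: "j < N" "\<gamma> \<le> d i j" "\<gamma> ^ k * v root l \<le> (avg N d ^^ k) v j l"
  proof (cases "i = root")
    case True
    have "\<exists>m\<le>k. (parent ^^ m) root = root" by (intro exI[of _ 0]) auto
    then show ?thesis using that[of root] Suc.IH[of root] root_node \<gamma>(2) True by blast
  next
    case False
    with Suc.prems obtain m where "m \<le> k" "(parent ^^ m) (parent i) = root"
      by (metis Suc_le_mono funpow_0 funpow_Suc_right not0_implies_Suc o_apply)
    then show ?thesis using Suc.IH[of "parent i"] parent_edge[OF Suc.prems(1) False] \<gamma>(3) Suc.prems(1) False that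
      by blast
  qed
  have "\<gamma> ^ Suc k * v root l \<le> d i j * (avg N d ^^ k) v j l"
    unfolding power_Suc mult.assoc using j nn[OF j(1)] \<gamma>(1) v[OF root_node]
    by (intro mult_mono) auto
  then show ?case using step[OF j(1)] by linarith
qed

lemma avg_pow_range_contraction:
  assumes \<gamma>: "0 \<le> \<gamma>" "\<gamma> ^ L \<le> 1" "\<And>i. i < N \<Longrightarrow> \<gamma> \<le> d i i"
      "\<And>i. i < N \<Longrightarrow> i \<noteq> root \<Longrightarrow> \<gamma> \<le> d i (parent i)"
    and L: "\<And>i. i < N \<Longrightarrow> \<exists>m\<le>L. (parent ^^ m) i = root"
    and ab: "\<And>j. j < N \<Longrightarrow> a \<le> v j l \<and> v j l \<le> b"
  shows "\<exists>a' b'. (\<forall>j<N. a' \<le> (avg N d ^^ (q * L)) v j l \<and> (avg N d ^^ (q * L)) v j l \<le> b')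
    \<and> b' - a' \<le> (1 - \<gamma> ^ L) ^ q * (b - a)"
  using ab
proof (induction q arbitrary: v a b)
  case (Suc q)
  \<comment> \<open>After \<open>L\<close> steps every node carries weight at least \<open>\<gamma>^L\<close> from the root, so the range shrinks.\<close>
  have "a + \<gamma> ^ L * (v root l - a) \<le> (avg N d ^^ L) v j l \<and> (avg N d ^^ L) v j l \<le> b - \<gamma> ^ L * (b - v root l)"
    if "j < N" for j
  proof
    have "\<gamma> ^ L * (- a + 1 * v root l) \<le> (avg N d ^^ L) (\<lambda>j l. - a + 1 * v j l) j l"
      using Suc.prems \<gamma> \<open>j < N\<close> L by (intro avg_pow_ge_root) auto
    then show "a + \<gamma> ^ L * (v root l - a) \<le> (avg N d ^^ L) v j l"
      unfolding avg_pow_affine[OF \<open>j < N\<close>] by simp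
    have "\<gamma> ^ L * (b + (- 1) * v root l) \<le> (avg N d ^^ L) (\<lambda>j l. b + (- 1) * v j l) j l"
      using Suc.prems \<gamma> \<open>j < N\<close> L by (intro avg_pow_ge_root) auto
    then show "(avg N d ^^ L) v j l \<le> b - \<gamma> ^ L * (b - v root l)"
      unfolding avg_pow_affine[OF \<open>j < N\<close>] by simp
  qed
  from Suc.IH[where v = "(avg N d ^^ L) v" and a = "a + \<gamma> ^ L * (v root l - a)"
      and b = "b - \<gamma> ^ L * (b - v root l)", OF this]
  obtain a' b'
    where "\<forall>j<N. a' \<le> (avg N d ^^ (q * L)) ((avg N d ^^ L) v) j l \<and> (avg N d ^^ (q * L)) ((avg N d ^^ L) v) j l \<le> b'"
      and width: "b' - a' \<le> (1 - \<gamma> ^ L) ^ q * ((b - \<gamma> ^ L * (b - v root l)) - (a + \<gamma> ^ L * (v root l - a)))"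
    by blast
  moreover have "(avg N d ^^ (q * L)) ((avg N d ^^ L) v) = (avg N d ^^ (Suc q * L)) v"
    by (simp only: mult_Suc add.commute[of L] funpow_add o_apply)
  moreover have "b' - a' \<le> (1 - \<gamma> ^ L) ^ Suc q * (b - a)"
    using width by (simp add: algebra_simps)
  ultimately show ?case by auto
next
  case 0
  then show ?case by (intro exI[of _ a] exI[of _ b]) auto
qed

lemma avg_pow_oscillation_decay:
  obtains \<rho> L where "0 < \<rho>" "\<rho> < 1" "0 < L"
    "\<And>m v l i i'. i < N \<Longrightarrow> i' < N \<Longrightarrow>
       \<bar>(avg N d ^^ m) v i l - (avg N d ^^ m) v i' l\<bar> \<le> 2 * \<rho> ^ (m div L) * (\<Sum>j<N. \<bar>v j l\<bar>)"
proof -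
  obtain \<gamma> where \<gamma>: "0 < \<gamma>" "\<gamma> < 1" "\<And>i. i < N \<Longrightarrow> \<gamma> \<le> d i i"
    "\<And>i. i < N \<Longrightarrow> i \<noteq> root \<Longrightarrow> \<gamma> \<le> d i (parent i)"
    by (rule weight_floor) blast+
  obtain L where L: "0 < L" "\<And>i. i < N \<Longrightarrow> \<exists>m\<le>L. (parent ^^ m) i = root"
    by (rule uniform_depth) blast+
  have \<gamma>L: "0 < 1 - \<gamma> ^ L" "1 - \<gamma> ^ L < 1" "\<gamma> ^ L \<le> 1"
    using \<gamma> L(1) by (auto simp: power_less_one_iff power_le_one)
  have "\<bar>(avg N d ^^ m) v i l - (avg N d ^^ m) v i' l\<bar> \<le> 2 * (1 - \<gamma> ^ L) ^ (m div L) * (\<Sum>j<N. \<bar>v j l\<bar>)"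
    if "i < N" "i' < N" for m v l i i'
  proof -
    define S where "S = (\<Sum>j<N. \<bar>v j l\<bar>)"
    have "- S \<le> v j l \<and> v j l \<le> S" if "j < N" for j
      using member_le_sum[of j "{..<N}" "\<lambda>j. \<bar>v j l\<bar>"] that by (auto simp: S_def)
    from avg_pow_range_contraction[where v = v and l = l and a = "- S" and b = S,
        OF less_imp_le[OF \<gamma>(1)] \<gamma>L(3) \<gamma>(3,4) L(2) this, of "m div L"]
    obtain a' b' where ab': "\<forall>j<N. a' \<le> (avg N d ^^ (m div L * L)) v j l \<and> (avg N d ^^ (m div L * L)) v j l \<le> b'"
      and width: "b' - a' \<le> (1 - \<gamma> ^ L) ^ (m div L) * (S - - S)" by blast
    have "(avg N d ^^ m) v = (avg N d ^^ (m mod L)) ((avg N d ^^ (m div L * L)) v)"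
      by (metis funpow_add o_apply mod_div_mult_eq)
    then have "a' \<le> (avg N d ^^ m) v i l \<and> (avg N d ^^ m) v i l \<le> b'"
      "a' \<le> (avg N d ^^ m) v i' l \<and> (avg N d ^^ m) v i' l \<le> b'"
      using avg_pow_bounds[of a' "(avg N d ^^ (m div L * L)) v" l b'] ab' that by auto
    then have "\<bar>(avg N d ^^ m) v i l - (avg N d ^^ m) v i' l\<bar> \<le> b' - a'" by linarith
    with width show ?thesis by (simp add: S_def algebra_simps)
  qed
  with \<gamma>L(1,2) L(1) that show ?thesis by blast
qed

text \<open>Powers of \<open>A\<close> grow at most polynomially while the averaging contracts disagreement
  geometrically.\<close>
lemma averaged_pow_summable_bound:
  assumes A: "A \<in> carrier_mat n n"
    and A_ev: "\<And>e. eigenvalue (map_mat complex_of_real A) e \<Longrightarrow> cmod e \<le> 1"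
  obtains bd where "summable bd" "\<And>m. 0 \<le> bd m"
    "\<And>m v i i' l. i < N \<Longrightarrow> i' < N \<Longrightarrow> l < n \<Longrightarrow>
      \<bar>mat_app (A ^\<^sub>m m) ((avg N d ^^ m) v i) l - mat_app (A ^\<^sub>m m) ((avg N d ^^ m) v i') l\<bar>
        \<le> bd m * (\<Sum>c<n. \<Sum>j<N. \<bar>v j c\<bar>)"
proof -
  obtain \<rho> L where \<rho>: "0 < \<rho>" "\<rho> < 1" "0 < L" and osc: "\<And>m v l i i'. i < N \<Longrightarrow> i' < N \<Longrightarrow>
      \<bar>(avg N d ^^ m) v i l - (avg N d ^^ m) v i' l\<bar> \<le> 2 * \<rho> ^ (m div L) * (\<Sum>j<N. \<bar>v j l\<bar>)"
    by (rule avg_pow_oscillation_decay) blast+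
  from pow_mat_entry_poly_bound[OF A _ A_ev] obtain c1 c2
    where c: "\<And>k a b. a < n \<Longrightarrow> b < n \<Longrightarrow> \<bar>(A ^\<^sub>m k) $$ (a, b)\<bar> \<le> c1 + c2 * real k ^ (n - 1)"
    by fastforce
  define bd where "bd m = (\<bar>c1\<bar> + \<bar>c2\<bar> * real m ^ (n - 1)) * (2 * \<rho> ^ (m div L))" for m
  have "\<bar>mat_app (A ^\<^sub>m m) ((avg N d ^^ m) v i) l - mat_app (A ^\<^sub>m m) ((avg N d ^^ m) v i') l\<bar>
      \<le> bd m * (\<Sum>c<n. \<Sum>j<N. \<bar>v j c\<bar>)" if "i < N" "i' < N" "l < n" for m v i i' l
  proof -
    have "\<bar>(A ^\<^sub>m m) $$ (l, c)\<bar> \<le> \<bar>c1\<bar> + \<bar>c2\<bar> * real m ^ (n - 1)" if "c < n" for c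
      using c[OF \<open>l < n\<close> that, of m] by (smt (verit) abs_ge_self abs_mult_pos mult_right_mono zero_le_power of_nat_0_le_iff)
    then have "\<bar>mat_app (A ^\<^sub>m m) ((avg N d ^^ m) v i - (avg N d ^^ m) v i') l\<bar>
        \<le> (\<bar>c1\<bar> + \<bar>c2\<bar> * real m ^ (n - 1))
          * (\<Sum>c<dim_col (A ^\<^sub>m m). \<bar>((avg N d ^^ m) v i - (avg N d ^^ m) v i') c\<bar>)"
      by (intro abs_mat_app_le) (auto simp: pow_mat_dim_square[OF A] simp del: pow_mat_dim)
    then have "\<bar>mat_app (A ^\<^sub>m m) ((avg N d ^^ m) v i) l - mat_app (A ^\<^sub>m m) ((avg N d ^^ m) v i') l\<bar>
        \<le> (\<bar>c1\<bar> + \<bar>c2\<bar> * real m ^ (n - 1)) * (\<Sum>c<n. \<bar>(avg N d ^^ m) v i c - (avg N d ^^ m) v i' c\<bar>)"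
      by (simp add: pow_mat_dim_square[OF A] del: pow_mat_dim)
    also have "\<dots> \<le> (\<bar>c1\<bar> + \<bar>c2\<bar> * real m ^ (n - 1)) * (\<Sum>c<n. 2 * \<rho> ^ (m div L) * (\<Sum>j<N. \<bar>v j c\<bar>))"
      using that by (intro mult_left_mono sum_mono osc) auto
    finally show ?thesis by (simp add: bd_def sum_distrib_left mult.assoc)
  qed
  moreover have "summable bd" "0 \<le> bd m" for m
    unfolding bd_def using summable_poly_times_geometric_div[OF \<rho>] \<rho> by auto
  ultimately show ?thesis using that by blast
qed

lemma averaged_recurrence_synchronizes:
  assumes A: "A \<in> carrier_mat n n"
    and A_ev: "\<And>e. eigenvalue (map_mat complex_of_real A) e \<Longrightarrow> cmod e \<le> 1"
    and rec: "\<And>k i. i < N \<Longrightarrow> \<Phi> (Suc k) i = mat_app A (avg N d (\<Phi> k) i) + U k i"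
    and U: "\<And>i. i < N \<Longrightarrow> vanishes n (\<lambda>k. U k i)"
    and i: "i < N" "i' < N"
  shows "vanishes n (\<lambda>k. \<Phi> k i - \<Phi> k i')"
  unfolding vanishes_def
proof (intro allI impI)
  fix l assume "l < n"
  obtain bd where bd: "summable bd" "\<And>m. 0 \<le> bd m" and bound: "\<And>m v.
      \<bar>mat_app (A ^\<^sub>m m) ((avg N d ^^ m) v i) l - mat_app (A ^\<^sub>m m) ((avg N d ^^ m) v i') l\<bar>
        \<le> bd m * (\<Sum>c<n. \<Sum>j<N. \<bar>v j c\<bar>)"
    using averaged_pow_summable_bound[OF A A_ev] i \<open>l < n\<close> by metis
  define mass where "mass v = (\<Sum>c<n. \<Sum>j<N. \<bar>v j c\<bar>)" for v :: "nat \<Rightarrow> nat \<Rightarrow> real"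
  have "\<bar>\<Phi> k i l - \<Phi> k i' l\<bar> \<le> bd k * mass (\<Phi> 0) + (\<Sum>t<k. bd (k - Suc t) * mass (U t))" for k
  proof -
    have "\<Phi> k i l - \<Phi> k i' l =
        (mat_app (A ^\<^sub>m k) ((avg N d ^^ k) (\<Phi> 0) i) l - mat_app (A ^\<^sub>m k) ((avg N d ^^ k) (\<Phi> 0) i') l)
        + (\<Sum>t<k. mat_app (A ^\<^sub>m (k - Suc t)) ((avg N d ^^ (k - Suc t)) (U t) i) l
                  - mat_app (A ^\<^sub>m (k - Suc t)) ((avg N d ^^ (k - Suc t)) (U t) i') l)"
      using avg_linear_recurrence[where \<Phi> = \<Phi> and U = U, OF A rec i(1) \<open>l < n\<close>, of k]
        avg_linear_recurrence[where \<Phi> = \<Phi> and U = U, OF A rec i(2) \<open>l < n\<close>, of k]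
      by (simp add: sum_subtractf)
    then show ?thesis unfolding mass_def
      by (simp only:) (intro order_trans[OF abs_triangle_ineq] add_mono order_trans[OF sum_abs] sum_mono bound)
  qed
  moreover have "(\<lambda>t. mass (U t)) \<longlonglongrightarrow> 0"
    using U unfolding mass_def vanishes_def by (auto intro!: tendsto_null_sum tendsto_rabs_zero)
  ultimately have "(\<lambda>k. \<Phi> k i l - \<Phi> k i' l) \<longlonglongrightarrow> 0"
    by (rule convolution_bound_tendsto_zero[OF _ bd(2,1)]) (simp add: mass_def sum_nonneg)
  then show "(\<lambda>k. (\<Phi> k i - \<Phi> k i') l) \<longlonglongrightarrow> 0" by simp
qed

end

lemma spanning_tree_rooted_averaging:
  assumes a_nonneg: "\<forall>i<N. \<forall>j<N. 0 \<le> a i j" and a_diag: "\<forall>i<N. a i i = 0"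
    and "has_directed_spanning_tree N a"
  obtains r par where "rooted_averaging N (dcoef N a) r par"
proof -
  have deg: "0 \<le> in_degree N a i" if "i < N" for i
    unfolding in_degree_def using a_nonneg that by (intro sum_nonneg) auto
  have row_sum: "(\<Sum>j<N. dcoef N a i j) = 1" if "i < N" for i
  proof -
    have "(\<Sum>j<N. dcoef N a i j) = (\<Sum>j<N. a i j + (if j = i then 1 else 0)) / (1 + in_degree N a i)"
      unfolding dcoef_def sum_divide_distrib using a_diag that by (intro sum.cong) auto
    also have "\<dots> = 1" using that deg[OF that] by (simp add: sum.distrib in_degree_def)
    finally show ?thesis .
  qed
  from assms(3) obtain r par where "r < N" and "\<forall>i<N. i \<noteq> r \<longrightarrow> par i < N \<and> 0 < a i (par i)"
    and reach: "\<forall>i<N. \<exists>k. (par ^^ k) i = r \<and> (\<forall>l<k. (par ^^ l) i \<noteq> r)"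
    unfolding has_directed_spanning_tree_def by blast
  moreover from reach have "\<forall>i<N. \<exists>k. (par ^^ k) i = r" by blast
  moreover have "0 < dcoef N a i j" if "i < N" "j < N" "j = i \<or> 0 < a i j" for i j
    using deg[OF \<open>i < N\<close>] that by (auto simp: dcoef_def)
  moreover have "0 \<le> dcoef N a i j" if "i < N" "j < N" for i j
    using deg[OF \<open>i < N\<close>] a_nonneg that by (auto simp: dcoef_def)
  ultimately have "rooted_averaging N (dcoef N a) r par"
    using row_sum by unfold_locales blast+
  then show ?thesis by (rule that)
qed

section \<open>The closed loop\<close>

text \<open>The protocol in the coordinates of the interconnection form; \<open>X k i\<close>, \<open>Om k i\<close>, \<open>Eta k i\<close>,
  \<open>Xh k i\<close> are the coordinate functions of \<open>xb\<^sub>i\<close>, \<open>\<omega>\<^sub>i\<close>, \<open>\<eta>\<^sub>i\<close>, \<open>xh\<^sub>i\<close> at time \<open>k\<close>.\<close>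

locale closed_loop = rooted_averaging N d root parent for N d root parent +
  fixes A B C K H :: "real mat" and nA mA p :: nat
    and As Cs :: "nat \<Rightarrow> real mat" and r :: "nat \<Rightarrow> nat"
    and X Om Eta Xh :: "nat \<Rightarrow> nat \<Rightarrow> nat \<Rightarrow> real"
  assumes mats: "A \<in> carrier_mat nA nA" "B \<in> carrier_mat nA mA" "C \<in> carrier_mat p nA"
      "K \<in> carrier_mat mA nA" "H \<in> carrier_mat nA p"
    and A_disc: "\<And>e. eigenvalue (map_mat complex_of_real A) e \<Longrightarrow> cmod e \<le> 1"
    and K_stab: "schur_stable (A - B * K)" and H_stab: "schur_stable (A - H * C)"
    and exosystems: "\<And>i. i < N \<Longrightarrow>
      As i \<in> carrier_mat (r i) (r i) \<and> Cs i \<in> carrier_mat mA (r i) \<and> schur_stable (As i)"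
    and X_rec: "\<And>k i. i < N \<Longrightarrow> X (Suc k) i =
      mat_app A (X k i) + mat_app B (mat_app (Cs i) (Om k i)) - mat_app B (mat_app K (Eta k i))"
    and Om_rec: "\<And>k i. i < N \<Longrightarrow> Om (Suc k) i = mat_app (As i) (Om k i)"
    and Xh_rec: "\<And>k i. i < N \<Longrightarrow> Xh (Suc k) i =
      mat_app A (Xh k i) - mat_app B (mat_app K (disagreement N d (Eta k) i))
      + mat_app H (mat_app C (disagreement N d (X k) i) - mat_app C (Xh k i))"
    and Eta_rec: "\<And>k i. i < N \<Longrightarrow> Eta (Suc k) i =
      mat_app (A - B * K) (Eta k i) + mat_app A (Xh k i) - mat_app A (disagreement N d (Eta k) i)"
begin

lemma disturbance_vanishes:
  assumes "i < N"
  shows "vanishes m (\<lambda>k. mat_app (Cs i) (Om k i))"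
proof -
  from exosystems[OF assms] have As: "As i \<in> carrier_mat (r i) (r i)" "schur_stable (As i)"
    and "dim_col (Cs i) = r i" by auto
  have "vanishes (r i) (\<lambda>k. Om k i)"
    by (rule schur_stable_input_to_state[OF As, where u = "\<lambda>k. 0"]) (simp_all add: Om_rec assms vanishes_zero)
  with \<open>dim_col (Cs i) = r i\<close> show ?thesis by (metis vanishes_mat_app)
qed

lemma disagreement_disturbance_vanishes:
  assumes "i < N"
  shows "vanishes m (\<lambda>k. disagreement N d (\<lambda>j. mat_app (Cs j) (Om k j)) i)"
  using assms disturbance_vanishes
  by (intro vanishes_disagreement[where z = "\<lambda>k j. mat_app (Cs j) (Om k j)"] vanishes_diff) auto

lemma disagreement_X_Suc:
  assumes "i < N"
  shows "disagreement N d (X (Suc k)) i = mat_app A (disagreement N d (X k) i)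
      + mat_app B (disagreement N d (\<lambda>j. mat_app (Cs j) (Om k j)) i)
      - mat_app B (mat_app K (disagreement N d (Eta k) i))"
proof -
  have "disagreement N d (X (Suc k)) i = disagreement N d (\<lambda>j. (mat_app A (X k j)
      + mat_app B (mat_app (Cs j) (Om k j))) - mat_app B (mat_app K (Eta k j))) i"
    using assms by (intro disagreement_cong) (simp_all add: X_rec)
  then show ?thesis
    by (simp only: disagreement_diff disagreement_add mat_app_disagreement)
qed

text \<open>The observer error is driven only by the disturbances, through the Schur stable \<open>A - H C\<close>.\<close>
lemma estimation_error_vanishes:
  assumes "i < N"
  shows "vanishes nA (\<lambda>k. disagreement N d (X k) i - Xh k i)"
proof (rule schur_stable_input_to_state)
  show "A - H * C \<in> carrier_mat nA nA" "schur_stable (A - H * C)" using mats H_stab by auto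
  show "disagreement N d (X (Suc k)) i - Xh (Suc k) i =
      mat_app (A - H * C) (disagreement N d (X k) i - Xh k i)
      + mat_app B (disagreement N d (\<lambda>j. mat_app (Cs j) (Om k j)) i)" for k
    using mats
    by (simp add: disagreement_X_Suc Xh_rec assms mat_app_diff_mult_mat[of A nA H p C] algebra_simps)
  show "vanishes nA (\<lambda>k. mat_app B (disagreement N d (\<lambda>j. mat_app (Cs j) (Om k j)) i))"
    using disagreement_disturbance_vanishes[OF assms] by (rule vanishes_mat_app)
qed

text \<open>\<open>X - Eta\<close> follows the averaged dynamics of \<open>A\<close> up to vanishing terms.\<close>
lemma tracking_difference_synchronizes:
  assumes "i < N" "j < N"
  shows "vanishes nA (\<lambda>k. (X k i - Eta k i) - (X k j - Eta k j))"
proof (rule averaged_recurrence_synchronizes[OF mats(1) A_disc _ _ assms])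
  fix k i assume "i < N"
  have avg_eq: "avg N d (\<lambda>j. X k j - Eta k j) i
      = X k i - Eta k i - (disagreement N d (X k) i - disagreement N d (Eta k) i)"
    using disagreement_eq[OF \<open>i < N\<close>, of "\<lambda>j. X k j - Eta k j"] disagreement_diff[of N d "X k" "Eta k" i]
    by simp
  show "X (Suc k) i - Eta (Suc k) i = mat_app A (avg N d (\<lambda>j. X k j - Eta k j) i)
      + (mat_app A (disagreement N d (X k) i - Xh k i) + mat_app B (mat_app (Cs i) (Om k i)))"
    unfolding avg_eq using mats by (simp add: X_rec Eta_rec \<open>i < N\<close> mat_app_diff_mult_mat[of A nA B mA K] algebra_simps)
next
  fix i assume "i < N"
  have "vanishes nA (\<lambda>k. mat_app A (disagreement N d (X k) i - Xh k i))"
    using estimation_error_vanishes[OF \<open>i < N\<close>] mats by (intro vanishes_mat_app) auto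
  moreover have "vanishes nA (\<lambda>k. mat_app B (mat_app (Cs i) (Om k i)))"
    using disturbance_vanishes[OF \<open>i < N\<close>] by (rule vanishes_mat_app)
  ultimately show "vanishes nA (\<lambda>k. mat_app A (disagreement N d (X k) i - Xh k i) + mat_app B (mat_app (Cs i) (Om k i)))"
    by (rule vanishes_add)
qed

lemma protocol_state_vanishes:
  assumes "i < N"
  shows "vanishes nA (\<lambda>k. Eta k i)"
proof (rule schur_stable_input_to_state[OF _ K_stab])
  show "A - B * K \<in> carrier_mat nA nA" using mats by auto
  show "Eta (Suc k) i = mat_app (A - B * K) (Eta k i)
      + mat_app A (disagreement N d (\<lambda>j. X k j - Eta k j) i - (disagreement N d (X k) i - Xh k i))" for k
    by (simp add: Eta_rec[OF assms] disagreement_diff)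
  have "vanishes nA (\<lambda>k. disagreement N d (\<lambda>j. X k j - Eta k j) i)"
    using tracking_difference_synchronizes[OF assms]
    by (intro vanishes_disagreement[where z = "\<lambda>k j. X k j - Eta k j"])
  with estimation_error_vanishes[OF assms]
  have "vanishes (dim_col A) (\<lambda>k. disagreement N d (\<lambda>j. X k j - Eta k j) i - (disagreement N d (X k) i - Xh k i))"
    using mats by (simp add: vanishes_diff)
  then show "vanishes nA (\<lambda>k. mat_app A (disagreement N d (\<lambda>j. X k j - Eta k j) i - (disagreement N d (X k) i - Xh k i)))"
    by (rule vanishes_mat_app)
qed

lemma outputs_synchronize:
  assumes "i < N" "j < N"
  shows "vanishes p (\<lambda>k. mat_app C (X k i) - mat_app C (X k j))"
proof -
  have "vanishes nA (\<lambda>k. (X k i - Eta k i) - (X k j - Eta k j) + (Eta k i - Eta k j))"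
    using assms
    by (intro vanishes_add vanishes_diff tracking_difference_synchronizes protocol_state_vanishes)
  then have "vanishes (dim_col C) (\<lambda>k. X k i - X k j)" using mats by simp
  then show ?thesis by (simp add: vanishes_mat_app[where m = p, of C "\<lambda>k. X k i - X k j", simplified])
qed

end

section \<open>Pre-compensated agents\<close>

lemma sum_lessThan_add: "(\<Sum>c<n1 + (n2::nat). f c) = (\<Sum>c<n1. f c) + (\<Sum>c<n2. f (n1 + c))"
  by (induction n2) (auto simp: add.assoc)

lemma mult_mat_vec_left_block:
  fixes C :: "'a::comm_ring_1 mat"
  assumes C: "C \<in> carrier_mat p n1" and a: "a \<in> carrier_vec n1" and b: "b \<in> carrier_vec n2"
  shows "mat p (n1 + n2) (\<lambda>(r, c). if c < n1 then C $$ (r, c) else 0) *\<^sub>v (a @\<^sub>v b) = C *\<^sub>v a"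
proof (rule eq_vecI)
  fix i assume "i < dim_vec (C *\<^sub>v a)"
  then have "i < p" using C by simp
  then have "(mat p (n1 + n2) (\<lambda>(r, c). if c < n1 then C $$ (r, c) else 0) *\<^sub>v (a @\<^sub>v b)) $ i
      = (\<Sum>c<n1 + n2. (if c < n1 then C $$ (i, c) else 0) * (a @\<^sub>v b) $ c)"
    using a b by (simp add: scalar_prod_def atLeast0LessThan)
  also have "\<dots> = (\<Sum>c<n1. C $$ (i, c) * a $ c)"
    unfolding sum_lessThan_add using a b by simp
  also have "\<dots> = (C *\<^sub>v a) $ i"
    using C a \<open>i < p\<close> by (simp add: scalar_prod_def atLeast0LessThan)
  finally show "(mat p (n1 + n2) (\<lambda>(r, c). if c < n1 then C $$ (r, c) else 0) *\<^sub>v (a @\<^sub>v b)) $ i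
      = (C *\<^sub>v a) $ i" .
qed (use C in auto)

lemma mult_mat_vec_stacked_rows:
  fixes P Q :: "'a::comm_ring_1 mat"
  assumes P: "P \<in> carrier_mat n1 m" and Q: "Q \<in> carrier_mat n2 m" and w: "w \<in> carrier_vec m"
  shows "mat (n1 + n2) m (\<lambda>(r, c). if r < n1 then P $$ (r, c) else Q $$ (r - n1, c)) *\<^sub>v w
      = (P *\<^sub>v w) @\<^sub>v (Q *\<^sub>v w)"
proof (rule eq_vecI)
  fix i assume "i < dim_vec ((P *\<^sub>v w) @\<^sub>v (Q *\<^sub>v w))"
  then have "i < n1 + n2" using P Q by simp
  then show "(mat (n1 + n2) m (\<lambda>(r, c). if r < n1 then P $$ (r, c) else Q $$ (r - n1, c)) *\<^sub>v w) $ i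
      = ((P *\<^sub>v w) @\<^sub>v (Q *\<^sub>v w)) $ i"
    using P Q w by (cases "i < n1") (simp_all add: scalar_prod_def row_def)
qed (use P Q in auto)

lemma stacked_precompensated_step:
  fixes Ag Bg Cm Ah Bh Eh Ch Dh :: "real mat"
  assumes mats: "Ag \<in> carrier_mat n n" "Bg \<in> carrier_mat n m" "Cm \<in> carrier_mat q n"
      "Ah \<in> carrier_mat s s" "Bh \<in> carrier_mat s q" "Eh \<in> carrier_mat s mA"
      "Ch \<in> carrier_mat m s" "Dh \<in> carrier_mat m mA"
    and vecs: "x \<in> carrier_vec n" "xi \<in> carrier_vec s" "w \<in> carrier_vec mA"
  shows "(Ag *\<^sub>v x + Bg *\<^sub>v (Ch *\<^sub>v xi - Dh *\<^sub>v w)) @\<^sub>v (Ah *\<^sub>v xi + Bh *\<^sub>v (Cm *\<^sub>v x) - Eh *\<^sub>v w)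
    = four_block_mat Ag (Bg * Ch) (Bh * Cm) Ah *\<^sub>v (x @\<^sub>v xi)
      - mat (n + s) mA (\<lambda>(r, c). if r < n then (Bg * Dh) $$ (r, c) else Eh $$ (r - n, c)) *\<^sub>v w"
    (is "?l = ?A *\<^sub>v _ - ?B *\<^sub>v w")
proof -
  have A: "?A *\<^sub>v (x @\<^sub>v xi) = (Ag *\<^sub>v x + (Bg * Ch) *\<^sub>v xi) @\<^sub>v ((Bh * Cm) *\<^sub>v x + Ah *\<^sub>v xi)"
    using mats vecs by (intro four_block_mat_mult_vec) auto
  have B: "?B *\<^sub>v w = ((Bg * Dh) *\<^sub>v w) @\<^sub>v (Eh *\<^sub>v w)"
    using mats vecs by (intro mult_mat_vec_stacked_rows) auto
  show ?thesis
  proof (rule eq_vecI)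
    fix i assume "i < dim_vec (?A *\<^sub>v (x @\<^sub>v xi) - ?B *\<^sub>v w)"
    then have "i < n + s" by simp
    then show "?l $ i = (?A *\<^sub>v (x @\<^sub>v xi) - ?B *\<^sub>v w) $ i"
      unfolding A B using mats vecs
      by (cases "i < n") (simp_all add: mult_minus_distrib_mat_vec[of Bg n m] assoc_mult_mat_vec[of _ n m _ s]
          assoc_mult_mat_vec[of _ n m _ mA] assoc_mult_mat_vec[of _ s q _ n])
  qed (use mats in simp)
qed

lemma block_triangular_recurrence:
  fixes A B Cs As :: "real mat"
  assumes mats: "A \<in> carrier_mat nA nA" "B \<in> carrier_mat nA mA" "Cs \<in> carrier_mat mA r" "As \<in> carrier_mat r r"
    and Z: "Z \<in> carrier_vec (nA + r)" and w: "w \<in> carrier_vec mA"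
    and Z': "Z' = four_block_mat A (B * Cs) (0\<^sub>m r nA) As *\<^sub>v Z
      - mat (nA + r) mA (\<lambda>(i, c). if i < nA then B $$ (i, c) else 0) *\<^sub>v w"
  defines "xb \<equiv> \<lambda>Z. vec nA (\<lambda>l. Z $ l)" and "om \<equiv> \<lambda>Z. vec r (\<lambda>l. Z $ (nA + l))"
  shows "xb Z' = A *\<^sub>v xb Z + (B * Cs) *\<^sub>v om Z - B *\<^sub>v w" and "om Z' = As *\<^sub>v om Z"
proof -
  have split: "Z = xb Z @\<^sub>v om Z"
    using Z by (intro eq_vecI) (auto simp: xb_def om_def)
  have "mat (nA + r) mA (\<lambda>(i, c). if i < nA then B $$ (i, c) else 0)
      = mat (nA + r) mA (\<lambda>(i, c). if i < nA then B $$ (i, c) else (0\<^sub>m r mA) $$ (i - nA, c))"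
    by (intro eq_matI) auto
  then have Bw: "mat (nA + r) mA (\<lambda>(i, c). if i < nA then B $$ (i, c) else 0) *\<^sub>v w
      = (B *\<^sub>v w) @\<^sub>v (0\<^sub>m r mA *\<^sub>v w)"
    using mult_mat_vec_stacked_rows[OF mats(2), of "0\<^sub>m r mA" r w] w by simp
  have Z'_blocks: "Z' = ((A *\<^sub>v xb Z + (B * Cs) *\<^sub>v om Z) @\<^sub>v (0\<^sub>m r nA *\<^sub>v xb Z + As *\<^sub>v om Z))
      - ((B *\<^sub>v w) @\<^sub>v (0\<^sub>m r mA *\<^sub>v w))"
    unfolding Z' Bw using mats
    by (subst split, subst four_block_mat_mult_vec) (auto simp: xb_def om_def)
  show "xb Z' = A *\<^sub>v xb Z + (B * Cs) *\<^sub>v om Z - B *\<^sub>v w"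
    unfolding Z'_blocks using mats w by (intro eq_vecI) (auto simp: xb_def om_def)
  show "om Z' = As *\<^sub>v om Z"
    unfolding Z'_blocks using mats w by (intro eq_vecI) (auto simp: xb_def om_def)
qed

lemma similarity_mult_mat_vec_diff:
  fixes T M M' P P' :: "'a::comm_ring_1 mat"
  assumes "T \<in> carrier_mat n n" "M \<in> carrier_mat n n" "M' \<in> carrier_mat n n" "P \<in> carrier_mat n m"
    and "T * M = M' * T" "T * P = P'" and "v \<in> carrier_vec n" "w \<in> carrier_vec m"
  shows "T *\<^sub>v (M *\<^sub>v v - P *\<^sub>v w) = M' *\<^sub>v (T *\<^sub>v v) - P' *\<^sub>v w"
proof -
  have "T *\<^sub>v (M *\<^sub>v v - P *\<^sub>v w) = (T * M) *\<^sub>v v - (T * P) *\<^sub>v w"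
    using assms(1-4,7,8) by (simp add: mult_minus_distrib_mat_vec[of T n n] assoc_mult_mat_vec[of T n n _ n]
        assoc_mult_mat_vec[of T n n _ m])
  then show ?thesis using assms by (simp add: assoc_mult_mat_vec[of M' n n T n])
qed

lemma interconnection_formD:
  assumes "Ag \<in> carrier_mat n n" "Ah \<in> carrier_mat s s" "A \<in> carrier_mat nA nA" "As \<in> carrier_mat r r"
    "B \<in> carrier_mat nA mA" "C \<in> carrier_mat p nA"
    and "interconnection_form Ag Bg Cg Cm Ah Bh Eh Ch Dh A B C As Cs"
  obtains T where "nA + r = n + s" "T \<in> carrier_mat (n + s) (n + s)"
    "T * four_block_mat Ag (Bg * Ch) (Bh * Cm) Ah = four_block_mat A (B * Cs) (0\<^sub>m r nA) As * T"
    "T * mat (n + s) mA (\<lambda>(i, c). if i < n then (Bg * Dh) $$ (i, c) else Eh $$ (i - n, c))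
      = mat (nA + r) mA (\<lambda>(i, c). if i < nA then B $$ (i, c) else 0)"
    "mat p (n + s) (\<lambda>(i, c). if c < n then Cg $$ (i, c) else 0)
      = mat p (nA + r) (\<lambda>(i, c). if c < nA then C $$ (i, c) else 0) * T"
proof -
  have dims: "dim_row Ag = n" "dim_row Ah = s" "dim_row A = nA" "dim_row As = r" "dim_col B = mA" "dim_row C = p"
    using assms by auto
  from assms(7) show ?thesis
    unfolding interconnection_form_def Let_def dims using that by blast
qed

lemma interconnection_coordinates:
  fixes Ag Bg Cg Cm Ah Bh Eh Ch Dh A B C As Cs :: "real mat" and x xi w :: "nat \<Rightarrow> real vec"
  assumes agent: "Ag \<in> carrier_mat n n" "Bg \<in> carrier_mat n m" "Cg \<in> carrier_mat p n" "Cm \<in> carrier_mat q n"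
    and pre: "Ah \<in> carrier_mat s s" "Bh \<in> carrier_mat s q" "Eh \<in> carrier_mat s mA"
      "Ch \<in> carrier_mat m s" "Dh \<in> carrier_mat m mA" "As \<in> carrier_mat r r" "Cs \<in> carrier_mat mA r"
    and target: "A \<in> carrier_mat nA nA" "B \<in> carrier_mat nA mA" "C \<in> carrier_mat p nA"
    and form: "interconnection_form Ag Bg Cg Cm Ah Bh Eh Ch Dh A B C As Cs"
    and init: "x 0 \<in> carrier_vec n" "xi 0 \<in> carrier_vec s" and w: "\<And>k. w k \<in> carrier_vec mA"
    and x_eq: "\<And>k. x (Suc k) = Ag *\<^sub>v x k + Bg *\<^sub>v (Ch *\<^sub>v xi k - Dh *\<^sub>v w k)"
    and xi_eq: "\<And>k. xi (Suc k) = Ah *\<^sub>v xi k + Bh *\<^sub>v (Cm *\<^sub>v x k) - Eh *\<^sub>v w k"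
  shows "\<exists>xb om. (\<forall>k. xb k \<in> carrier_vec nA \<and> om k \<in> carrier_vec r) \<and>
    (\<forall>k. xb (Suc k) = A *\<^sub>v xb k + (B * Cs) *\<^sub>v om k - B *\<^sub>v w k) \<and>
    (\<forall>k. om (Suc k) = As *\<^sub>v om k) \<and> (\<forall>k. Cg *\<^sub>v x k = C *\<^sub>v xb k)"
proof -
  have "x k \<in> carrier_vec n \<and> xi k \<in> carrier_vec s" for k
  proof (cases k)
    case (Suc k')
    have "dim_vec (Ag *\<^sub>v x k' + Bg *\<^sub>v (Ch *\<^sub>v xi k' - Dh *\<^sub>v w k')) = n" using agent(2) by simp
    moreover have "dim_vec (Ah *\<^sub>v xi k' + Bh *\<^sub>v (Cm *\<^sub>v x k') - Eh *\<^sub>v w k') = s" using pre(3) by simp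
    ultimately show ?thesis unfolding Suc x_eq xi_eq carrier_vec_def by simp
  qed (use init in simp)
  then have x: "x k \<in> carrier_vec n" and xi: "xi k \<in> carrier_vec s" for k by auto
  obtain T where dims: "nA + r = n + s" and T: "T \<in> carrier_mat (n + s) (n + s)"
    and TA: "T * four_block_mat Ag (Bg * Ch) (Bh * Cm) Ah = four_block_mat A (B * Cs) (0\<^sub>m r nA) As * T"
    and TB: "T * mat (n + s) mA (\<lambda>(i, c). if i < n then (Bg * Dh) $$ (i, c) else Eh $$ (i - n, c))
      = mat (nA + r) mA (\<lambda>(i, c). if i < nA then B $$ (i, c) else 0)"
    and TC: "mat p (n + s) (\<lambda>(i, c). if c < n then Cg $$ (i, c) else 0)
      = mat p (nA + r) (\<lambda>(i, c). if c < nA then C $$ (i, c) else 0) * T"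
    using interconnection_formD[OF agent(1) pre(1) target(1) pre(6) target(2,3) form] by blast
  define Z where "Z k = T *\<^sub>v (x k @\<^sub>v xi k)" for k
  have Z: "Z k \<in> carrier_vec (nA + r)" for k
    using T x xi dims by (simp add: Z_def)
  have "Z (Suc k) = four_block_mat A (B * Cs) (0\<^sub>m r nA) As *\<^sub>v Z k
      - mat (nA + r) mA (\<lambda>(i, c). if i < nA then B $$ (i, c) else 0) *\<^sub>v w k" for k
    unfolding Z_def x_eq xi_eq stacked_precompensated_step[OF agent(1,2,4) pre(1-5) x[of k] xi[of k] w[of k]]
  proof (rule similarity_mult_mat_vec_diff[OF T _ _ _ TA TB append_carrier_vec[OF x xi] w])
    show "four_block_mat Ag (Bg * Ch) (Bh * Cm) Ah \<in> carrier_mat (n + s) (n + s)"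
      using agent pre by (intro four_block_carrier_mat) auto
    show "four_block_mat A (B * Cs) (0\<^sub>m r nA) As \<in> carrier_mat (n + s) (n + s)"
      unfolding dims[symmetric] using target pre by (intro four_block_carrier_mat) auto
  qed simp
  then have rec: "vec nA (\<lambda>l. Z (Suc k) $ l) = A *\<^sub>v vec nA (\<lambda>l. Z k $ l)
        + (B * Cs) *\<^sub>v vec r (\<lambda>l. Z k $ (nA + l)) - B *\<^sub>v w k"
      "vec r (\<lambda>l. Z (Suc k) $ (nA + l)) = As *\<^sub>v vec r (\<lambda>l. Z k $ (nA + l))" for k
    using block_triangular_recurrence[OF target(1,2) pre(7,6) Z w] by auto
  have "Cg *\<^sub>v x k = C *\<^sub>v vec nA (\<lambda>l. Z k $ l)" for k
  proof -
    have "Cg *\<^sub>v x k = mat p (n + s) (\<lambda>(i, c). if c < n then Cg $$ (i, c) else 0) *\<^sub>v (x k @\<^sub>v xi k)"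
      by (rule mult_mat_vec_left_block[OF agent(3) x xi, symmetric])
    also have "\<dots> = mat p (nA + r) (\<lambda>(i, c). if c < nA then C $$ (i, c) else 0) *\<^sub>v Z k"
      unfolding TC Z_def using T x xi dims by (simp add: assoc_mult_mat_vec[of _ p "n + s" T "n + s"])
    also have "Z k = vec nA (\<lambda>l. Z k $ l) @\<^sub>v vec r (\<lambda>l. Z k $ (nA + l))"
      using Z by (intro eq_vecI) auto
    finally show ?thesis by (simp add: mult_mat_vec_left_block[OF target(3)])
  qed
  with rec show ?thesis
    by (intro exI[of _ "\<lambda>k. vec nA (\<lambda>l. Z k $ l)"] exI[of _ "\<lambda>k. vec r (\<lambda>l. Z k $ (nA + l))"]) auto
qed

context rooted_averaging
begin

lemma closed_loop_coords:
  assumes mats: "A \<in> carrier_mat nA nA" "B \<in> carrier_mat nA mA" "C \<in> carrier_mat p nA"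
      "K \<in> carrier_mat mA nA" "H \<in> carrier_mat nA p"
    and A_disc: "\<And>e. eigenvalue (map_mat complex_of_real A) e \<Longrightarrow> cmod e \<le> 1"
    and K_stab: "schur_stable (A - B * K)" and H_stab: "schur_stable (A - H * C)"
    and exosystems: "\<And>i. i < N \<Longrightarrow>
      As i \<in> carrier_mat (r i) (r i) \<and> Cs i \<in> carrier_mat mA (r i) \<and> schur_stable (As i)"
    and carriers: "\<And>i k. i < N \<Longrightarrow> xb i k \<in> carrier_vec nA \<and> om i k \<in> carrier_vec (r i)"
    and outputs: "\<And>i k. i < N \<Longrightarrow> y i k = C *\<^sub>v xb i k"
    and init: "\<And>i. i < N \<Longrightarrow> eta i 0 \<in> carrier_vec nA \<and> xh i 0 \<in> carrier_vec nA"
    and xb_eq: "\<And>i k. i < N \<Longrightarrow> xb i (Suc k) = A *\<^sub>v xb i k + (B * Cs i) *\<^sub>v om i k - B *\<^sub>v (K *\<^sub>v eta i k)"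
    and om_eq: "\<And>i k. i < N \<Longrightarrow> om i (Suc k) = As i *\<^sub>v om i k"
    and xh_eq: "\<And>i k. i < N \<Longrightarrow> xh i (Suc k) = A *\<^sub>v xh i k
      - B *\<^sub>v (K *\<^sub>v vec nA (\<lambda>l. \<Sum>j<N. d i j * (eta i k $ l - eta j k $ l)))
      + H *\<^sub>v (vec p (\<lambda>l. \<Sum>j<N. d i j * (y i k $ l - y j k $ l)) - C *\<^sub>v xh i k)"
    and eta_eq: "\<And>i k. i < N \<Longrightarrow> eta i (Suc k) = (A - B * K) *\<^sub>v eta i k + A *\<^sub>v xh i k
      - A *\<^sub>v vec nA (\<lambda>l. \<Sum>j<N. d i j * (eta i k $ l - eta j k $ l))"
  shows "closed_loop N d root parent A B C K H nA mA p As Cs r (\<lambda>k i. coords (xb i k))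
    (\<lambda>k i. coords (om i k)) (\<lambda>k i. coords (eta i k)) (\<lambda>k i. coords (xh i k))"
proof -
  have dims: "dim_row A = nA" "dim_col A = nA" "dim_row B = nA" "dim_col B = mA" "dim_row C = p"
    "dim_col C = nA" "dim_row K = mA" "dim_col K = nA" "dim_row H = nA" "dim_col H = p"
    using mats by auto
  have "dim_vec (eta i k) = nA \<and> dim_vec (xh i k) = nA" if "i < N" for i k
    using init[OF that] by (cases k) (simp_all add: eta_eq xh_eq that dims)
  with carriers have vdims: "dim_vec (xb i k) = nA" "dim_vec (om i k) = r i"
      "dim_vec (eta i k) = nA" "dim_vec (xh i k) = nA" if "i < N" for i k
    using that by auto
  have Cs: "dim_row (Cs i) = mA" "dim_col (Cs i) = r i" "dim_col (As i) = r i" if "i < N" for i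
    using exosystems[OF that] by auto
  show ?thesis
  proof (unfold_locales)
    fix k i assume "i < N"
    show "coords (xb i (Suc k)) = mat_app A (coords (xb i k))
        + mat_app B (mat_app (Cs i) (coords (om i k))) - mat_app B (mat_app K (coords (eta i k)))"
      using \<open>i < N\<close> by (simp add: xb_eq coords_diff coords_add coords_mult_mat_vec mat_app_mult dims vdims Cs)
    show "coords (om i (Suc k)) = mat_app (As i) (coords (om i k))"
      using \<open>i < N\<close> by (simp add: om_eq coords_mult_mat_vec vdims Cs)
    have eta_dis: "coords (vec nA (\<lambda>l. \<Sum>j<N. d i j * (eta i k $ l - eta j k $ l)))
        = disagreement N d (\<lambda>j. coords (eta j k)) i"
      using \<open>i < N\<close> vdims by (intro coords_vec_disagreement) auto
    have "coords (vec p (\<lambda>l. \<Sum>j<N. d i j * (y i k $ l - y j k $ l)))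
        = disagreement N d (\<lambda>j. coords (y j k)) i"
      using \<open>i < N\<close> dims outputs by (intro coords_vec_disagreement) auto
    also have "\<dots> = disagreement N d (\<lambda>j. mat_app C (coords (xb j k))) i"
      using \<open>i < N\<close> vdims dims outputs by (intro disagreement_cong) (auto simp: coords_mult_mat_vec)
    also have "\<dots> = mat_app C (disagreement N d (\<lambda>j. coords (xb j k)) i)"
      by (simp only: mat_app_disagreement)
    finally have "coords (vec p (\<lambda>l. \<Sum>j<N. d i j * (y i k $ l - y j k $ l)))
        = mat_app C (disagreement N d (\<lambda>j. coords (xb j k)) i)" .
    with eta_dis show "coords (xh i (Suc k)) = mat_app A (coords (xh i k))
        - mat_app B (mat_app K (disagreement N d (\<lambda>j. coords (eta j k)) i))
        + mat_app H (mat_app C (disagreement N d (\<lambda>j. coords (xb j k)) i) - mat_app C (coords (xh i k)))"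
      using \<open>i < N\<close> by (simp add: xh_eq coords_diff coords_add coords_mult_mat_vec dims vdims)
    from eta_dis show "coords (eta i (Suc k)) = mat_app (A - B * K) (coords (eta i k))
        + mat_app A (coords (xh i k)) - mat_app A (disagreement N d (\<lambda>j. coords (eta j k)) i)"
      using \<open>i < N\<close> by (simp add: eta_eq coords_diff coords_add coords_mult_mat_vec dims vdims)
  qed (use assms in auto)
qed

end

lemma interconnected_agents_coordinates:
  fixes Ag Bg Cg Cmg Ah Bh Eh Ch Dh As Cs :: "nat \<Rightarrow> real mat" and x xi w :: "nat \<Rightarrow> nat \<Rightarrow> real vec"
  assumes agent_dims: "\<forall>i<N. Ag i \<in> carrier_mat (n i) (n i) \<and> Bg i \<in> carrier_mat (n i) (m i) \<and>
        Cg i \<in> carrier_mat p (n i) \<and> Cmg i \<in> carrier_mat (q i) (n i)"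
    and pre_dims: "\<forall>i<N. Ah i \<in> carrier_mat (s i) (s i) \<and> Bh i \<in> carrier_mat (s i) (q i) \<and>
        Eh i \<in> carrier_mat (s i) mA \<and> Ch i \<in> carrier_mat (m i) (s i) \<and> Dh i \<in> carrier_mat (m i) mA \<and>
        As i \<in> carrier_mat (r i) (r i) \<and> Cs i \<in> carrier_mat mA (r i)"
    and target: "A \<in> carrier_mat nA nA" "B \<in> carrier_mat nA mA" "C \<in> carrier_mat p nA"
    and form: "\<forall>i<N. interconnection_form (Ag i) (Bg i) (Cg i) (Cmg i)
        (Ah i) (Bh i) (Eh i) (Ch i) (Dh i) A B C (As i) (Cs i)"
    and init: "\<And>i. i < N \<Longrightarrow> x i 0 \<in> carrier_vec (n i) \<and> xi i 0 \<in> carrier_vec (s i)"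
    and w: "\<And>i k. w i k \<in> carrier_vec mA"
    and x_eq: "\<forall>i<N. \<forall>k. x i (Suc k) = Ag i *\<^sub>v x i k + Bg i *\<^sub>v (Ch i *\<^sub>v xi i k - Dh i *\<^sub>v w i k)"
    and xi_eq: "\<forall>i<N. \<forall>k. xi i (Suc k) = Ah i *\<^sub>v xi i k + Bh i *\<^sub>v (Cmg i *\<^sub>v x i k) - Eh i *\<^sub>v w i k"
  obtains xb om where "\<And>i k. i < N \<Longrightarrow> xb i k \<in> carrier_vec nA \<and> om i k \<in> carrier_vec (r i)"
    "\<And>i k. i < N \<Longrightarrow> xb i (Suc k) = A *\<^sub>v xb i k + (B * Cs i) *\<^sub>v om i k - B *\<^sub>v w i k"
    "\<And>i k. i < N \<Longrightarrow> om i (Suc k) = As i *\<^sub>v om i k"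
    "\<And>i k. i < N \<Longrightarrow> Cg i *\<^sub>v x i k = C *\<^sub>v xb i k"
proof -
  have "\<exists>xb om. (\<forall>k. xb k \<in> carrier_vec nA \<and> om k \<in> carrier_vec (r i)) \<and>
      (\<forall>k. xb (Suc k) = A *\<^sub>v xb k + (B * Cs i) *\<^sub>v om k - B *\<^sub>v w i k) \<and>
      (\<forall>k. om (Suc k) = As i *\<^sub>v om k) \<and> (\<forall>k. Cg i *\<^sub>v x i k = C *\<^sub>v xb k)"
    if i: "i < N" for i
  proof (rule interconnection_coordinates[where x = "x i" and xi = "xi i" and w = "w i"])
    show "Ag i \<in> carrier_mat (n i) (n i)" "Bg i \<in> carrier_mat (n i) (m i)"
      "Cg i \<in> carrier_mat p (n i)" "Cmg i \<in> carrier_mat (q i) (n i)"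
      using agent_dims i by auto
    show "Ah i \<in> carrier_mat (s i) (s i)" "Bh i \<in> carrier_mat (s i) (q i)"
      "Eh i \<in> carrier_mat (s i) mA" "Ch i \<in> carrier_mat (m i) (s i)" "Dh i \<in> carrier_mat (m i) mA"
      "As i \<in> carrier_mat (r i) (r i)" "Cs i \<in> carrier_mat mA (r i)"
      using pre_dims i by auto
    show "x i 0 \<in> carrier_vec (n i)" "xi i 0 \<in> carrier_vec (s i)" using init[OF i] by auto
    show "interconnection_form (Ag i) (Bg i) (Cg i) (Cmg i) (Ah i) (Bh i) (Eh i) (Ch i) (Dh i) A B C (As i) (Cs i)"
      using form i by blast
    show "x i (Suc k) = Ag i *\<^sub>v x i k + Bg i *\<^sub>v (Ch i *\<^sub>v xi i k - Dh i *\<^sub>v w i k)" for k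
      using x_eq i by blast
    show "xi i (Suc k) = Ah i *\<^sub>v xi i k + Bh i *\<^sub>v (Cmg i *\<^sub>v x i k) - Eh i *\<^sub>v w i k" for k
      using xi_eq i by blast
  qed (fact target w)+
  then show ?thesis using that by metis
qed

theorem theorem3:
  fixes N :: nat and a :: "nat \<Rightarrow> nat \<Rightarrow> real"
    and n m q s r :: "nat \<Rightarrow> nat"
    and Ag Bg Cg Cmg :: "nat \<Rightarrow> real mat"
    and Ah Bh Eh Ch Dh :: "nat \<Rightarrow> real mat"
    and As Cs :: "nat \<Rightarrow> real mat"
    and A B C K H :: "real mat" and nA mA p nq :: nat
    and x xi xh eta :: "nat \<Rightarrow> nat \<Rightarrow> real vec"
  assumes N2: "N \<ge> 2"
    (* agents *)
    and agent_dims: "\<forall>i<N. Ag i \<in> carrier_mat (n i) (n i) \<and> Bg i \<in> carrier_mat (n i) (m i) \<and>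
        Cg i \<in> carrier_mat p (n i) \<and> Cmg i \<in> carrier_mat (q i) (n i)"
    and agent_stab: "\<forall>i<N. stabilizable (Ag i) (Bg i)"
    and agent_det: "\<forall>i<N. detectable (Cg i) (Ag i)"
    and agent_rinv: "\<forall>i<N. right_invertible (Cg i) (Ag i) (Bg i)"
    and agent_det_m: "\<forall>i<N. detectable (Cmg i) (Ag i)"
    (* target model (C,A,B) *)
    and target_dims: "A \<in> carrier_mat nA nA" "B \<in> carrier_mat nA mA" "C \<in> carrier_mat p nA"
    and rankC: "vec_space.rank p C = p"
    and unif: "invertible_uniform_rank C A B nq"
    and nq_ge: "\<forall>i<N. max_inf_zero_order (Cg i) (Ag i) (Bg i) \<le> nq"
    and no_zeros: "\<forall>z. \<not> invariant_zero C A B z"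
    and A_disc: "\<forall>ev. eigenvalue (map_mat complex_of_real A) ev \<longrightarrow> cmod ev \<le> 1"
    (* pre-compensators *)
    and pre_dims: "\<forall>i<N. Ah i \<in> carrier_mat (s i) (s i) \<and> Bh i \<in> carrier_mat (s i) (q i) \<and>
        Eh i \<in> carrier_mat (s i) mA \<and> Ch i \<in> carrier_mat (m i) (s i) \<and> Dh i \<in> carrier_mat (m i) mA \<and>
        As i \<in> carrier_mat (r i) (r i) \<and> Cs i \<in> carrier_mat mA (r i)"
    and pre_form: "\<forall>i<N. interconnection_form (Ag i) (Bg i) (Cg i) (Cmg i)
        (Ah i) (Bh i) (Eh i) (Ch i) (Dh i) A B C (As i) (Cs i)"
    and As_stable: "\<forall>i<N. schur_stable (As i)"
    (* protocol gains *)
    and K_dim: "K \<in> carrier_mat mA nA" and H_dim: "H \<in> carrier_mat nA p"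
    and K_stab: "schur_stable (A - B * K)" and H_stab: "schur_stable (A - H * C)"
    (* network *)
    and a_nonneg: "\<forall>i<N. \<forall>j<N. a i j \<ge> 0"
    and a_diag: "\<forall>i<N. a i i = 0"
    and tree: "has_directed_spanning_tree N a"
    (* initial conditions (arbitrary) *)
    and init: "\<forall>i<N. x i 0 \<in> carrier_vec (n i) \<and> xi i 0 \<in> carrier_vec (s i) \<and>
        xh i 0 \<in> carrier_vec nA \<and> eta i 0 \<in> carrier_vec nA"
    (* closed-loop dynamics: agents + protocol *)
    and agent_eq: "\<forall>i<N. \<forall>k. x i (Suc k) = Ag i *\<^sub>v x i k +
        Bg i *\<^sub>v (Ch i *\<^sub>v xi i k - Dh i *\<^sub>v (K *\<^sub>v eta i k))"
    and xi_eq: "\<forall>i<N. \<forall>k. xi i (Suc k) = Ah i *\<^sub>v xi i k + Bh i *\<^sub>v (Cmg i *\<^sub>v x i k)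
        - Eh i *\<^sub>v (K *\<^sub>v eta i k)"
    and xh_eq: "\<forall>i<N. \<forall>k. xh i (Suc k) = A *\<^sub>v xh i k
        - B *\<^sub>v (K *\<^sub>v vec nA (\<lambda>l. \<Sum>j<N. dcoef N a i j * ((eta i k) $ l - (eta j k) $ l)))
        + H *\<^sub>v (vec p (\<lambda>l. \<Sum>j<N. dcoef N a i j * ((Cg i *\<^sub>v x i k) $ l - (Cg j *\<^sub>v x j k) $ l))
                 - C *\<^sub>v xh i k)"
    and eta_eq: "\<forall>i<N. \<forall>k. eta i (Suc k) = (A - B * K) *\<^sub>v eta i k + A *\<^sub>v xh i k
        - A *\<^sub>v vec nA (\<lambda>l. \<Sum>j<N. dcoef N a i j * ((eta i k) $ l - (eta j k) $ l))"
  shows "\<forall>i<N. \<forall>j<N. \<forall>l<p.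
           (\<lambda>k. (Cg i *\<^sub>v x i k) $ l - (Cg j *\<^sub>v x j k) $ l) \<longlonglongrightarrow> 0"
proof (intro allI impI)
  fix i j l assume ij: "i < N" "j < N" and "l < p"
  obtain root par where "rooted_averaging N (dcoef N a) root par"
    using spanning_tree_rooted_averaging[OF a_nonneg a_diag tree] .
  then interpret rooted_averaging N "dcoef N a" root par .
  have w: "K *\<^sub>v eta i' k \<in> carrier_vec mA" for i' k
    using K_dim by (intro carrier_vecI) auto
  have "x i' 0 \<in> carrier_vec (n i') \<and> xi i' 0 \<in> carrier_vec (s i')" if "i' < N" for i'
    using init that by auto
  from interconnected_agents_coordinates[where w = "\<lambda>i k. K *\<^sub>v eta i k",
      OF agent_dims pre_dims target_dims pre_form this w agent_eq xi_eq]
  obtain xb om where xb: "\<And>i k. i < N \<Longrightarrow> xb i k \<in> carrier_vec nA \<and> om i k \<in> carrier_vec (r i)"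
    and xb_eq: "\<And>i k. i < N \<Longrightarrow> xb i (Suc k) = A *\<^sub>v xb i k + (B * Cs i) *\<^sub>v om i k - B *\<^sub>v (K *\<^sub>v eta i k)"
    and om_eq: "\<And>i k. i < N \<Longrightarrow> om i (Suc k) = As i *\<^sub>v om i k"
    and y: "\<And>i k. i < N \<Longrightarrow> Cg i *\<^sub>v x i k = C *\<^sub>v xb i k"
    by blast
  have "\<And>i. i < N \<Longrightarrow> As i \<in> carrier_mat (r i) (r i) \<and> Cs i \<in> carrier_mat mA (r i) \<and> schur_stable (As i)"
    "\<And>i. i < N \<Longrightarrow> eta i 0 \<in> carrier_vec nA \<and> xh i 0 \<in> carrier_vec nA"
    using pre_dims As_stable init by auto
  from closed_loop_coords[where y = "\<lambda>i k. Cg i *\<^sub>v x i k", OF target_dims K_dim H_dim A_disc[rule_format]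
      K_stab H_stab this(1) xb y this(2) xb_eq om_eq xh_eq[rule_format] eta_eq[rule_format]]
  have "closed_loop N (dcoef N a) root par A B C K H nA mA p As Cs r (\<lambda>k i. coords (xb i k))
      (\<lambda>k i. coords (om i k)) (\<lambda>k i. coords (eta i k)) (\<lambda>k i. coords (xh i k))" .
  from closed_loop.outputs_synchronize[OF this ij] \<open>l < p\<close>
  have "(\<lambda>k. mat_app C (coords (xb i k)) l - mat_app C (coords (xb j k)) l) \<longlonglongrightarrow> 0"
    by (simp add: vanishes_def)
  then show "(\<lambda>k. (Cg i *\<^sub>v x i k) $ l - (Cg j *\<^sub>v x j k) $ l) \<longlonglongrightarrow> 0"
    using ij \<open>l < p\<close> xb target_dims by (simp add: y coords_mult_mat_vec[symmetric] coords_def)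
qed

end
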